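(* Let $(\mathcal{A},\varphi)$ be a $C^*$-probability space and let $(a_i)_{i=1}^\infty$ be a family of elements of $\mathcal{A}$ which is V-monotonically independent with respect to $\varphi$ (index set $I=\mathbb{N}_+$ with its natural order), identically distributed (i.e. $\varphi(a_i^k)$ does not depend on $i$ for every $k\in\mathbb{N}$), with $\varphi(a_i)=0$ and $\varphi(a_i^2)=1$. Let $S_N=\frac{1}{\sqrt N}\sum_{i=1}^N a_i$. Then for every $n\in\mathbb{N}$, $$\lim_{N\to\infty}\varphi(S_N^n)=\begin{cases}\dfrac{|\mathcal{OV}^2(2k)|}{k!} & \text{if } n=2k,\\ 0 & \text{if } n \text{ is odd.}\end{cases}$$
   Context: For $1\le m\le n$ let $I_{n,m}=\{(i_1,\dots,i_n)\in I^n: i_1>\dots>i_m<\dots<i_n\}$ (strict inequalities; $I_{1,1}=I$) and $I_n=\bigcup_{m=1}^n I_{n,m}$. A family $(\mathcal{A}_i)_{i\in I}$ of subalgebras of a unital algebra $\mathcal{A}$ with state $\varphi$ ($\varphi(\mathbf 1)=1$), where each $\mathcal{A}_i$ has an inner unit $\mathbf 1_i$ ($\mathbf 1_i a=a\mathbf 1_i=a$ for $a\in\mathcal{A}_i$), is V-monotonically independent with respect to $\varphi$ if $\varphi(\mathbf 1_i)=1$ for all $i$ and for every $(i_1,\dots,i_n)\in I^n$ with $i_k\ne i_{k+1}$ for all $k$ and all $a_k\in\mathcal{A}_{i_k}$: (i) if $\varphi(a_1)=\dots=\varphi(a_n)=0$ then $\varphi(a_1\cdots a_n)=0$; (ii)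 letting $r$ be the largest index with $(i_1,\dots,i_r)\in I_r$, for every $j\in[n]$ with $\varphi(a_1)=\dots=\varphi(a_{j-1})=0$ one has $\varphi(a_1\cdots a_{j-1}\mathbf 1_{i_j}a_{j+1}\cdots a_n)=\varphi(a_1\cdots a_{j-1}a_{j+1}\cdots a_n)$ if $j\le r$ and $=0$ if $j>r$. A family of elements $(a_i)$ is V-monotonically independent if the algebras generated by $a_i$ and $\mathbf 1_i$ (for given inner units $\mathbf 1_i$) are. A $C^*$-probability space is a unital $C^*$-algebra with a state. For a non-crossing partition $\pi$ of $[n]$ and blocks $B,B'\in\pi$, write $B'<B$ if there are two consecutive elements $p<p'$ of $B'$ (no element of $B'$ between them) such that $p<k<p'$ for all $k\in B$; $B'$ is the nearest outer block of $B$ if $B'<B$ and there is no $B''$ with $B'<B''<B$. A labeling $\mathfrak i:\pi\to I$ is V-monotone if for every sequence of blocks $B_1,\dots,B_r$ ($r\ge1$) such that $B_{k+1}$ is the nearest outer block of $B_k$ for each $k<r$, we have $(\mathfrak i(B_1),\dots,\mathfrak i(B_r))\in I_r$. $\mathcal{OV}^2(2k)$ denotes the set of pairs $(\pi,\mathfrak i)$ where $\pi$ is a non-crossing pair partition of $[2k]$ (all blocks of size 2) and $\mathfrak i:\pi\to[k]$ is a bijection which is a V-monotone labeling (with $I=\mathbb{N}_+$). *)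

theory Defs
  imports "HOL-Analysis.Analysis" "HOL-Library.Disjoint_Sets" "HOL-Library.FuncSet"
begin

text \<open>A unital complex C*-algebra is modelled on a real Banach algebra type with unit
  together with a complex scalar multiplication extending the real one and an involution.\<close>

definition cstar_algebra :: "(complex \<Rightarrow> 'a::{real_normed_algebra_1,banach} \<Rightarrow> 'a) \<Rightarrow> ('a \<Rightarrow> 'a) \<Rightarrow> bool"
  where "cstar_algebra smul star \<longleftrightarrow>
    (\<forall>r x. smul (complex_of_real r) x = scaleR r x) \<and>
    (\<forall>c x y. smul c (x + y) = smul c x + smul c y) \<and>
    (\<forall>c d x. smul (c + d) x = smul c x + smul d x) \<and>
    (\<forall>c d x. smul c (smul d x) = smul (c * d) x) \<and>
    (\<forall>c x y. smul c (x * y) = smul c x * y \<and> smul c (x * y) = x * smul c y) \<and>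
    (\<forall>c x. norm (smul c x) = cmod c * norm x) \<and>
    (\<forall>x. star (star x) = x) \<and>
    (\<forall>x y. star (x + y) = star x + star y) \<and>
    (\<forall>c x. star (smul c x) = smul (cnj c) (star x)) \<and>
    (\<forall>x y. star (x * y) = star y * star x) \<and>
    (\<forall>x. norm (star x * x) = (norm x)\<^sup>2)"

definition is_state :: "(complex \<Rightarrow> 'a \<Rightarrow> 'a) \<Rightarrow> ('a \<Rightarrow> 'a) \<Rightarrow> ('a::ring_1 \<Rightarrow> complex) \<Rightarrow> bool"
  where "is_state smul star \<phi> \<longleftrightarrow>
    (\<forall>x y. \<phi> (x + y) = \<phi> x + \<phi> y) \<and>
    (\<forall>c x. \<phi> (smul c x) = c * \<phi> x) \<and>
    (\<forall>x. Im (\<phi> (star x * x)) = 0 \<and> Re (\<phi> (star x * x)) \<ge> 0) \<and>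
    \<phi> 1 = 1"

definition cstar_prob_space :: "(complex \<Rightarrow> 'a \<Rightarrow> 'a) \<Rightarrow> ('a \<Rightarrow> 'a) \<Rightarrow> ('a::{real_normed_algebra_1,banach} \<Rightarrow> complex) \<Rightarrow> bool"
  where "cstar_prob_space smul star \<phi> \<longleftrightarrow> cstar_algebra smul star \<and> is_state smul star \<phi>"

inductive_set gen_alg :: "(complex \<Rightarrow> 'a \<Rightarrow> 'a) \<Rightarrow> 'a::ring set \<Rightarrow> 'a set"
  for smul :: "complex \<Rightarrow> 'a \<Rightarrow> 'a" and S :: "'a set" where
  gen_base: "x \<in> S \<Longrightarrow> x \<in> gen_alg smul S"
| gen_add: "x \<in> gen_alg smul S \<Longrightarrow> y \<in> gen_alg smul S \<Longrightarrow> x + y \<in> gen_alg smul S"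
| gen_smul: "x \<in> gen_alg smul S \<Longrightarrow> smul c x \<in> gen_alg smul S"
| gen_mult: "x \<in> gen_alg smul S \<Longrightarrow> y \<in> gen_alg smul S \<Longrightarrow> x * y \<in> gen_alg smul S"

text \<open>vseq xs: xs \<in> I_n with n = length xs, i.e. xs = (i_1,...,i_n) with
  i_1 > ... > i_m < ... < i_n for some 1 \<le> m \<le> n.\<close>

definition vseq :: "nat list \<Rightarrow> bool"
  where "vseq xs \<longleftrightarrow> xs \<noteq> [] \<and>
    (\<exists>m. 1 \<le> m \<and> m \<le> length xs \<and> sorted_wrt (>) (take m xs) \<and> sorted_wrt (<) (drop (m - 1) xs))"

text \<open>Family of subsets A i (i \<in> I) of the algebra with inner units u i.
  Lists are 0-indexed, so the paper's index j \<le> r becomes j < r.\<close>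

definition vmono_indep :: "('a::ring_1 \<Rightarrow> complex) \<Rightarrow> nat set \<Rightarrow> (nat \<Rightarrow> 'a set) \<Rightarrow> (nat \<Rightarrow> 'a) \<Rightarrow> bool"
  where "vmono_indep \<phi> I A u \<longleftrightarrow>
    (\<forall>i\<in>I. u i \<in> A i \<and> (\<forall>a\<in>A i. u i * a = a \<and> a * u i = a) \<and> \<phi> (u i) = 1) \<and>
    (\<forall>is as. is \<noteq> [] \<and> set is \<subseteq> I \<and> length as = length is \<and>
        (\<forall>k. Suc k < length is \<longrightarrow> is ! k \<noteq> is ! Suc k) \<and>
        (\<forall>k < length is. as ! k \<in> A (is ! k)) \<longrightarrow>
      ((\<forall>k < length as. \<phi> (as ! k) = 0) \<longrightarrow> \<phi> (prod_list as) = 0) \<and>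
      (let r = (GREATEST r. r \<le> length is \<and> vseq (take r is)) in
        \<forall>j < length is. (\<forall>k < j. \<phi> (as ! k) = 0) \<longrightarrow>
          \<phi> (prod_list (as[j := u (is ! j)])) =
            (if j < r then \<phi> (prod_list (take j as @ drop (Suc j) as)) else 0)))"

definition noncrossing :: "nat set set \<Rightarrow> bool"
  where "noncrossing \<pi> \<longleftrightarrow> (\<forall>B\<in>\<pi>. \<forall>B'\<in>\<pi>. B \<noteq> B' \<longrightarrow>
     \<not> (\<exists>a b c d. a < b \<and> b < c \<and> c < d \<and> a \<in> B \<and> c \<in> B \<and> b \<in> B' \<and> d \<in> B'))"

definition block_lt :: "nat set \<Rightarrow> nat set \<Rightarrow> bool"
  where "block_lt B' B \<longleftrightarrow> (\<exists>p p'. p \<in> B' \<and> p' \<in> B' \<and> p < p' \<and>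
     (\<forall>q\<in>B'. \<not> (p < q \<and> q < p')) \<and> (\<forall>k\<in>B. p < k \<and> k < p'))"

definition nearest_outer :: "nat set set \<Rightarrow> nat set \<Rightarrow> nat set \<Rightarrow> bool"
  where "nearest_outer \<pi> B' B \<longleftrightarrow> block_lt B' B \<and>
     \<not> (\<exists>B''\<in>\<pi>. block_lt B' B'' \<and> block_lt B'' B)"

definition vmono_labeling :: "nat set set \<Rightarrow> (nat set \<Rightarrow> nat) \<Rightarrow> bool"
  where "vmono_labeling \<pi> f \<longleftrightarrow> (\<forall>Bs. Bs \<noteq> [] \<and> set Bs \<subseteq> \<pi> \<and>
     (\<forall>k. Suc k < length Bs \<longrightarrow> nearest_outer \<pi> (Bs ! Suc k) (Bs ! k)) \<longrightarrow> vseq (map f Bs))"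

definition OV2 :: "nat \<Rightarrow> (nat set set \<times> (nat set \<Rightarrow> nat)) set"
  where "OV2 k = {(\<pi>, f). partition_on {1..2*k} \<pi> \<and> (\<forall>B\<in>\<pi>. card B = 2) \<and> noncrossing \<pi> \<and>
     f \<in> extensional \<pi> \<and> bij_betw f \<pi> {1..k} \<and> vmono_labeling \<pi> f}"

end

theory Submission
  imports Defs "HOL-Computational_Algebra.Polynomial"
begin

(* Expanding \<phi>(S_N^n) gives a sum over words w \<in> {1..N}^n of mixed moments \<phi>(a_w1 \<cdots> a_wn).
   V-monotone independence makes a mixed moment vanish as soon as some letter occurs exactly once,
   and leaves it unchanged under order-preserving relabelings of the letters. Hence the words in
   which some letter occurs three times or more involve at most (n-1)/2 distinct letters and
   contribute O(N^((n-1)/2)), which is negligible after the scaling N^(-n/2).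
   In a pair word, an adjacent repetition v v is written a_v^2 = (a_v^2 - 1) + u_v: the centered
   part contributes nothing, and the unit u_v may be deleted exactly when the prefix ending with
   v is a V-sequence. By induction the moment of a pair word is 1 if it is noncrossing and every
   stack of open pairs is a V-sequence, and 0 otherwise. Such words on k given letters correspond
   to the labeled partitions in OV2 k, so the pair words contribute
   (N choose k) |OV2 k| / N^k \<longrightarrow> |OV2 k| / k!. *)

section \<open>V-sequences\<close>

lemma vseq_single[simp]: "vseq [x]"
  unfolding vseq_def by (rule conjI, simp, rule exI[of _ 1]) simp

lemma vseq_take:
  assumes "vseq xs" "0 < n"
  shows "vseq (take n xs)"
proof (cases "length xs \<le> n")
  case True then show ?thesis using assms by simp
next
  case False
  from assms obtain m where m: "1 \<le> m" "m \<le> length xs" "sorted_wrt (>) (take m xs)"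
    "sorted_wrt (<) (drop (m - 1) xs)" unfolding vseq_def by blast
  show ?thesis
  proof (cases "m \<le> n")
    case True
    have "sorted_wrt (>) (take m (take n xs))" using m True by (simp add: min_def)
    moreover have "drop (m - 1) (take n xs) = take (n - (m - 1)) (drop (m - 1) xs)"
      by (simp add: drop_take)
    then have "sorted_wrt (<) (drop (m - 1) (take n xs))" using m(4) sorted_wrt_take by metis
    ultimately show ?thesis unfolding vseq_def using m True False assms(2)
      by (intro conjI exI[of _ m]) auto
  next
    case nle: False
    have "sorted_wrt (>) (take n (take n xs))" using m nle sorted_wrt_take[OF m(3), of n] by (simp add: min_def)
    moreover have "drop (n - 1) (take n xs) = [xs ! (n - 1)]"
    proof -
      have "take n xs = take (n - 1) xs @ [xs ! (n - 1)]"
        using False assms(2) take_Suc_conv_app_nth[of "n - 1" xs] by simp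
      then show ?thesis using False assms(2) by simp
    qed
    then have "sorted_wrt (<) (drop (n - 1) (take n xs))" by simp
    ultimately show ?thesis unfolding vseq_def using False assms(2)
      by (intro conjI exI[of _ n]) auto
  qed
qed

lemma vseq_drop:
  assumes "vseq xs" "i < length xs"
  shows "vseq (drop i xs)"
proof -
  from assms obtain m where m: "1 \<le> m" "m \<le> length xs" "sorted_wrt (>) (take m xs)"
    "sorted_wrt (<) (drop (m - 1) xs)" unfolding vseq_def by blast
  show ?thesis
  proof (cases "i < m")
    case True
    have "take (m - i) (drop i xs) = drop i (take m xs)" using True by (simp add: take_drop)
    then have "sorted_wrt (>) (take (m - i) (drop i xs))" using m(3) sorted_wrt_drop by metis
    moreover have "drop (m - i - 1) (drop i xs) = drop (m - 1) xs" using True by simp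
    ultimately show ?thesis unfolding vseq_def using m True assms(2)
      by (intro conjI exI[of _ "m - i"]) auto
  next
    case False
    have "take 1 (drop i xs) = [xs ! i]" using assms(2)
      by (simp add: take_Suc_conv_app_nth[of 0] hd_drop_conv_nth take_Suc)
    moreover have "drop i xs = drop (i - (m - 1)) (drop (m - 1) xs)" using False m by simp
    then have "sorted_wrt (<) (drop i xs)" using m(4) sorted_wrt_drop by metis
    ultimately show ?thesis unfolding vseq_def using assms(2)
      by (intro conjI exI[of _ 1]) auto
  qed
qed

lemma vseq_rev:
  assumes "vseq xs"
  shows "vseq (rev xs)"
proof -
  from assms obtain m where m: "1 \<le> m" "m \<le> length xs" "sorted_wrt (>) (take m xs)"
    "sorted_wrt (<) (drop (m - 1) xs)" unfolding vseq_def by blast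
  let ?m = "length xs - m + 1"
  have "take ?m (rev xs) = rev (drop (length xs - ?m) xs)" by (simp add: take_rev)
  also have "length xs - ?m = m - 1" using m by simp
  finally have A: "sorted_wrt (>) (take ?m (rev xs))" using m(4) by (simp add: sorted_wrt_rev)
  have "drop (?m - 1) (rev xs) = rev (take (length xs - (?m - 1)) xs)" by (simp add: drop_rev)
  also have "length xs - (?m - 1) = m" using m by simp
  finally have B: "sorted_wrt (<) (drop (?m - 1) (rev xs))" using m(3) by (simp add: sorted_wrt_rev)
  show ?thesis unfolding vseq_def using A B m assms
    by (intro conjI exI[of _ ?m]) (auto simp: vseq_def)
qed

lemma vseq_rev_iff: "vseq (rev xs) \<longleftrightarrow> vseq xs"
  using vseq_rev[of xs] vseq_rev[of "rev xs"] by auto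

lemma vseq_take_drop:
  assumes "vseq xs" "take n (drop i xs) \<noteq> []"
  shows "vseq (take n (drop i xs))"
proof -
  have "i < length xs" "0 < n" using assms(2) by auto
  then show ?thesis using vseq_take vseq_drop assms(1) by blast
qed

lemma vseq_Nil[simp]: "\<not> vseq []" by (simp add: vseq_def)

lemma vseq_map_iff:
  assumes "strict_mono_on (set xs) f"
  shows "vseq (map f xs) \<longleftrightarrow> vseq xs"
proof -
  have eq1: "sorted_wrt (>) (map f ys) \<longleftrightarrow> sorted_wrt (>) ys" if "set ys \<subseteq> set xs" for ys
  proof -
    have "sorted_wrt (>) (map f ys) \<longleftrightarrow> sorted_wrt (\<lambda>x y. f y < f x) ys" by (simp add: sorted_wrt_map)
    also have "\<dots> \<longleftrightarrow> sorted_wrt (\<lambda>x y. y < x) ys"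
    proof
      assume h: "sorted_wrt (\<lambda>x y. f y < f x) ys"
      show "sorted_wrt (\<lambda>x y. y < x) ys"
        by (rule sorted_wrt_mono_rel[OF _ h]) (use that strict_mono_on_less[OF assms] in auto)
    next
      assume h: "sorted_wrt (\<lambda>x y. y < x) ys"
      show "sorted_wrt (\<lambda>x y. f y < f x) ys"
        by (rule sorted_wrt_mono_rel[OF _ h]) (use that strict_mono_on_less[OF assms] in auto)
    qed
    finally show ?thesis .
  qed
  have eq2: "sorted_wrt (<) (map f ys) \<longleftrightarrow> sorted_wrt (<) ys" if "set ys \<subseteq> set xs" for ys
  proof -
    have "sorted_wrt (<) (map f ys) \<longleftrightarrow> sorted_wrt (\<lambda>x y. f x < f y) ys" by (simp add: sorted_wrt_map)
    also have "\<dots> \<longleftrightarrow> sorted_wrt (\<lambda>x y. x < y) ys"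
    proof
      assume h: "sorted_wrt (\<lambda>x y. f x < f y) ys"
      show "sorted_wrt (\<lambda>x y. x < y) ys"
        by (rule sorted_wrt_mono_rel[OF _ h]) (use that strict_mono_on_less[OF assms] in auto)
    next
      assume h: "sorted_wrt (\<lambda>x y. x < y) ys"
      show "sorted_wrt (\<lambda>x y. f x < f y) ys"
        by (rule sorted_wrt_mono_rel[OF _ h]) (use that strict_mono_on_less[OF assms] in auto)
    qed
    finally show ?thesis .
  qed
  have s1: "set (take m xs) \<subseteq> set xs" "set (drop m xs) \<subseteq> set xs" for m
    by (auto dest: in_set_takeD in_set_dropD)
  show ?thesis unfolding vseq_def using eq1[OF s1(1)] eq2[OF s1(2)]
    by (simp add: take_map drop_map)
qed

lemma less_Greatest_vseq_iff:
  assumes "is \<noteq> []" "j < length is"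
  shows "j < (GREATEST r. r \<le> length is \<and> vseq (take r is)) \<longleftrightarrow> vseq (take (Suc j) is)"
proof -
  let ?G = "GREATEST r. r \<le> length is \<and> vseq (take r is)"
  have ex: "1 \<le> length is \<and> vseq (take 1 is)" using assms by (cases "is") auto
  have bnd: "\<forall>y. y \<le> length is \<and> vseq (take y is) \<longrightarrow> y \<le> length is" by simp
  have G: "?G \<le> length is \<and> vseq (take ?G is)"
    by (rule GreatestI_nat[where P="\<lambda>r. r \<le> length is \<and> vseq (take r is)", OF ex]) auto
  show ?thesis
  proof
    assume "j < ?G"
    then have "take (Suc j) is = take (Suc j) (take ?G is)" by (simp add: min_def)
    moreover have "vseq (take (Suc j) (take ?G is))" using vseq_take G by blast
    ultimately show "vseq (take (Suc j) is)" by simp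
  next
    assume "vseq (take (Suc j) is)"
    then have "Suc j \<le> ?G" using assms(2) by (intro Greatest_le_nat[where b = "length is"]) auto
    then show "j < ?G" by simp
  qed
qed

text \<open>A letter (i, p) stands for the element p(a i) of the algebra, p a polynomial.\<close>

type_synonym 'p word = "(nat \<times> 'p) list"

fun merge_adj :: "'p::times word \<Rightarrow> 'p word" where
  "merge_adj (x # y # xs) =
     (if fst x = fst y then merge_adj ((fst x, snd x * snd y) # xs) else x # merge_adj (y # xs))"
| "merge_adj xs = xs"

lemma hd_merge_adj: "W \<noteq> [] \<Longrightarrow> merge_adj W \<noteq> [] \<and> fst (hd (merge_adj W)) = fst (hd W)"
  by (induction W rule: merge_adj.induct) auto

lemma successively_merge_adj: "successively (\<noteq>) (map fst (merge_adj W))"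
proof (induction W rule: merge_adj.induct)
  case (1 x y xs)
  show ?case
  proof (cases "fst x = fst y")
    case True then show ?thesis using 1 by simp
  next
    case False
    have "merge_adj (y # xs) \<noteq> []" "fst (hd (merge_adj (y # xs))) = fst y"
      using hd_merge_adj[of "y # xs"] by auto
    then show ?thesis using 1 False by (cases "merge_adj (y # xs)") (auto simp: successively_Cons)
  qed
qed auto

lemma length_merge_adj_le: "length (merge_adj W) \<le> length W"
  by (induction W rule: merge_adj.induct) (auto simp: le_Suc_eq)

lemma length_merge_adj_less:
  "\<not> successively (\<noteq>) (map fst W) \<Longrightarrow> length (merge_adj W) < length W"
proof (induction W rule: merge_adj.induct)
  case (1 x y xs)
  show ?case
  proof (cases "fst x = fst y")
    case True then show ?thesis using length_merge_adj_le[of "(fst x, snd x * snd y) # xs"] by simp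
  next
    case False then show ?thesis using 1 by (auto simp: successively_Cons)
  qed
qed auto

lemma set_merge_adj: "set (map fst (merge_adj W)) \<subseteq> set (map fst W)"
  by (induction W rule: merge_adj.induct) auto

lemma merge_adj_map_apfst:
  "inj_on f (set (map fst W)) \<Longrightarrow> merge_adj (map (apfst f) W) = map (apfst f) (merge_adj W)"
proof (induction W rule: merge_adj.induct)
  case (1 x y xs)
  have e: "f (fst x) = f (fst y) \<longleftrightarrow> fst x = fst y" using 1(3) by (auto dest: inj_onD)
  show ?case
  proof (cases "fst x = fst y")
    case True
    have "inj_on f (set (map fst ((fst x, snd x * snd y) # xs)))"
      using 1(3) by (auto intro: inj_on_subset)
    then show ?thesis using 1 True by (simp add: apfst_def map_prod_def split_beta)
  next
    case False
    have "inj_on f (set (map fst (y # xs)))" using 1(3) by (auto intro: inj_on_subset)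
    then show ?thesis using 1 False e by (simp add: apfst_def map_prod_def split_beta)
  qed
qed auto

lemma count_list_merge_adj_le: "count_list (map fst (merge_adj W)) i \<le> count_list (map fst W) i"
  by (induction W rule: merge_adj.induct) auto

lemma successively_map_apfst_inj:
  assumes "inj_on f (set (map fst W))"
  shows "successively (\<noteq>) (map fst (map (apfst f) W)) \<longleftrightarrow> successively (\<noteq>) (map fst W)"
proof -
  have fm: "map fst (map (apfst f) W) = map f (map fst W)" by simp
  show ?thesis unfolding fm successively_map
    by (rule successively_cong) (use assms in \<open>auto dest: inj_onD\<close>)
qed

lemma in_set_merge_adj:
  "count_list (map fst W) i = 1 \<Longrightarrow> (i, p) \<in> set W \<Longrightarrow> (i, p) \<in> set (merge_adj W)"
proof (induction W rule: merge_adj.induct)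
  case (1 x y xs)
  show ?case
  proof (cases "fst x = fst y")
    case True
    have "(i, p) \<noteq> x" "(i, p) \<noteq> y" using 1(3) True by (auto split: if_splits)
    then have "(i, p) \<in> set xs" using 1(4) by auto
    moreover have "i \<noteq> fst x" using 1(3) True by (auto split: if_splits)
    ultimately show ?thesis using 1 True by auto
  next
    case False
    then have m: "merge_adj (x # y # xs) = x # merge_adj (y # xs)" by simp
    show ?thesis
    proof (cases "(i, p) = x")
      case True then show ?thesis using m by simp
    next
      case ne: False
      then have mem: "(i, p) \<in> set (y # xs)" using 1(4) by simp
      then have "i \<in> set (map fst (y # xs))" by force
      then have "count_list (map fst (y # xs)) i \<noteq> 0" by (simp only: count_list_0_iff) simp
      then have "count_list (map fst (y # xs)) i = 1" using 1(3) by (auto split: if_splits)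
      then show ?thesis using 1(2)[OF False _ mem] m by simp
    qed
  qed
qed auto

lemma count_list_delete_le:
  "count_list (map fst (take j W @ drop (Suc j) W)) i \<le> count_list (map fst W) i"
proof (cases "j < length W")
  case True
  have "map fst W = map fst (take j W @ W ! j # drop (Suc j) W)"
    using id_take_nth_drop[OF True] by simp
  then show ?thesis by simp
qed simp

lemma length_filter_list_update_less:
  assumes "j < length xs" "P (xs ! j)" "\<not> P x"
  shows "length (filter P (xs[j := x])) < length (filter P xs)"
proof -
  have "length (filter P xs) = length (filter P (take j xs)) + 1 + length (filter P (drop (Suc j) xs))"
    using arg_cong[where f = "\<lambda>V. length (filter P V)", OF id_take_nth_drop[OF assms(1)]] assms(2)
    by simp
  moreover have "length (filter P (xs[j := x]))
      = length (filter P (take j xs)) + length (filter P (drop (Suc j) xs))"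
    using assms(1,3) by (simp add: upd_conv_take_nth_drop)
  ultimately show ?thesis by simp
qed

text \<open>Induction used to evaluate states on alternating words: a word is either merged into an
  alternating one, or entirely centered, or its first non-centered letter p is split as
  (p - c) + c, producing a word with one centered letter more and a shorter word.
  The measure length * (length + 1) + (number of non-centered letters) decreases in each step.\<close>

lemma word_centering_induct[case_names merge centered split]:
  fixes W :: "'p::times word" and z :: "'p \<Rightarrow> bool"
  assumes merge: "\<And>W. \<not> successively (\<noteq>) (map fst W) \<Longrightarrow> P (merge_adj W) \<Longrightarrow> P W"
    and centered: "\<And>W. successively (\<noteq>) (map fst W) \<Longrightarrow> \<forall>x\<in>set W. z (snd x) \<Longrightarrow> P W"
    and split: "\<And>W j. successively (\<noteq>) (map fst W) \<Longrightarrow> j < length W \<Longrightarrow> \<not> z (snd (W ! j)) \<Longrightarrow>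
      \<forall>k<j. z (snd (W ! k)) \<Longrightarrow> (\<And>q. z q \<Longrightarrow> P (W[j := (fst (W ! j), q)])) \<Longrightarrow>
      P (take j W @ drop (Suc j) W) \<Longrightarrow> P W"
  shows "P W"
proof (induction "length W * Suc (length W) + length (filter (\<lambda>x. \<not> z (snd x)) W)"
    arbitrary: W rule: less_induct)
  case less
  have shorter: "P V" if "length V < length W" for V
  proof (rule less)
    have "Suc (length V) * Suc (length V) \<le> length W * Suc (length W)"
      using that by (intro mult_le_mono) auto
    then have "length V * Suc (length V) + Suc (length V) \<le> length W * Suc (length W)"
      by simp
    moreover have "length (filter (\<lambda>x. \<not> z (snd x)) V) \<le> length V" by (rule length_filter_le)
    ultimately show "length V * Suc (length V) + length (filter (\<lambda>x. \<not> z (snd x)) V)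
        < length W * Suc (length W) + length (filter (\<lambda>x. \<not> z (snd x)) W)" by linarith
  qed
  show ?case
  proof (cases "successively (\<noteq>) (map fst W)")
    case False
    then show ?thesis using merge shorter length_merge_adj_less by blast
  next
    case alt: True
    show ?thesis
    proof (cases "\<forall>x\<in>set W. z (snd x)")
      case True then show ?thesis using centered alt by blast
    next
      case False
      then have "\<exists>j. j < length W \<and> \<not> z (snd (W ! j))" by (metis in_set_conv_nth)
      then obtain j where j: "j < length W" "\<not> z (snd (W ! j))" "\<forall>k<j. z (snd (W ! k))"
        unfolding exists_least_iff[where P = "\<lambda>j. j < length W \<and> \<not> z (snd (W ! j))"]
        using order.strict_trans by blast
      have "P (W[j := (fst (W ! j), q)])" if q: "z q" for q
      proof (rule less)
        have "length (filter (\<lambda>x. \<not> z (snd x)) (W[j := (fst (W ! j), q)]))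
            < length (filter (\<lambda>x. \<not> z (snd x)) W)"
          using length_filter_list_update_less[where P = "\<lambda>x. \<not> z (snd x)", OF j(1,2)] q by simp
        then show "length (W[j := (fst (W ! j), q)]) * Suc (length (W[j := (fst (W ! j), q)]))
            + length (filter (\<lambda>x. \<not> z (snd x)) (W[j := (fst (W ! j), q)]))
          < length W * Suc (length W) + length (filter (\<lambda>x. \<not> z (snd x)) W)" by simp
      qed
      moreover have "P (take j W @ drop (Suc j) W)" using shorter j by simp
      ultimately show ?thesis using split alt j by blast
    qed
  qed
qed

section \<open>Noncrossing V-monotone pair words\<close>

definition pair_word :: "nat list \<Rightarrow> bool" where
  "pair_word xs \<longleftrightarrow> (\<forall>v\<in>set xs. count_list xs v = 2)"

definition noncrossing_word :: "nat list \<Rightarrow> bool" where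
  "noncrossing_word xs \<longleftrightarrow> \<not> (\<exists>a b c d. a < b \<and> b < c \<and> c < d \<and> d < length xs \<and>
      xs ! a = xs ! c \<and> xs ! b = xs ! d \<and> xs ! a \<noteq> xs ! b)"

definition once_letters :: "nat list \<Rightarrow> nat list" where
  "once_letters t = filter (\<lambda>x. count_list t x = 1) t"

text \<open>In a pair word, the letters occurring once in the prefix up to position p are the pairs
  still open at p, listed from the outermost to the innermost one.\<close>

definition open_stacks :: "nat list \<Rightarrow> nat list set" where
  "open_stacks xs = (\<lambda>p. once_letters (take (Suc p) xs)) ` {..<length xs}"

definition vmono_word :: "nat list \<Rightarrow> bool" where
  "vmono_word xs \<longleftrightarrow> (\<forall>L\<in>open_stacks xs. L = [] \<or> vseq L)"

lemma pair_word_other_occ: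
  assumes "count_list xs (xs ! p) = 2" "p < length xs"
  shows "\<exists>c<length xs. c \<noteq> p \<and> xs ! c = xs ! p"
proof (rule ccontr)
  assume "\<not> ?thesis"
  then have "{i. i < length xs \<and> xs ! p = xs ! i} \<subseteq> {p}" by auto
  then have "card {i. i < length xs \<and> xs ! p = xs ! i} \<le> 1"
    using card_mono[of "{p}"] by fastforce
  moreover have "card {i. i < length xs \<and> xs ! p = xs ! i} = 2"
    using assms(1) by (simp add: count_list_eq_length_filter length_filter_conv_card)
  ultimately show False by simp
qed

lemma noncrossing_pair_word_adjacent_repeat:
  assumes "noncrossing_word xs" "pair_word xs"
  shows "a < b \<Longrightarrow> b < length xs \<Longrightarrow> xs ! a = xs ! b \<Longrightarrow> \<exists>i. a \<le> i \<and> Suc i \<le> b \<and> xs ! i = xs ! Suc i"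
proof (induction "b - a" arbitrary: a b rule: less_induct)
  case less
  show ?case
  proof (cases "b = Suc a")
    case True then show ?thesis using less by auto
  next
    case False
    then have ab: "Suc a < b" using less(2) by simp
    show ?thesis
    proof (cases "xs ! Suc a = xs ! a")
      case True then show ?thesis using ab by (intro exI[of _ a]) auto
    next
      case ne: False
      have "count_list xs (xs ! Suc a) = 2" using assms(2) ab less(3) unfolding pair_word_def
        by (meson less_trans nth_mem)
      then obtain c where c: "c < length xs" "c \<noteq> Suc a" "xs ! c = xs ! Suc a"
        using pair_word_other_occ ab less(3) by (meson less_trans)
      consider "c < a" | "c = a" | "Suc a < c \<and> c < b" | "c = b" | "b < c" using c(2) by linarith
      then show ?thesis
      proof cases
        case 1
        have "c < a \<and> a < Suc a \<and> Suc a < b \<and> b < length xs \<and> xs ! c = xs ! Suc a \<and> xs ! a = xs ! b \<and> xs ! c \<noteq> xs ! a"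
          using 1 ab less(3,4) c ne by auto
        then have False using assms(1) unfolding noncrossing_word_def by blast
        then show ?thesis ..
      next
        case 2 then show ?thesis using c ne by simp
      next
        case 3
        then obtain i where "Suc a \<le> i \<and> Suc i \<le> c \<and> xs ! i = xs ! Suc i"
          using less(1)[of c "Suc a"] c(3) less(3) by fastforce
        then show ?thesis using 3 by (intro exI[of _ i]) auto
      next
        case 4 then show ?thesis using c ne less(4) by simp
      next
        case 5
        have "a < Suc a \<and> Suc a < b \<and> b < c \<and> c < length xs \<and> xs ! a = xs ! b \<and> xs ! Suc a = xs ! c \<and> xs ! a \<noteq> xs ! Suc a"
          using 5 ab less(3,4) c ne by auto
        then have False using assms(1) unfolding noncrossing_word_def by blast
        then show ?thesis ..
      qed
    qed
  qed
qed

lemma noncrossing_pair_word_not_alternating: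
  assumes "noncrossing_word xs" "pair_word xs" "xs \<noteq> []" "successively (\<noteq>) xs"
  shows False
proof -
  have "count_list xs (xs ! 0) = 2" using assms(2,3) unfolding pair_word_def by auto
  then obtain c where c: "c < length xs" "c \<noteq> 0" "xs ! c = xs ! 0" using pair_word_other_occ assms(3) by blast
  then obtain i where "0 \<le> i \<and> Suc i \<le> c \<and> xs ! i = xs ! Suc i"
    using noncrossing_pair_word_adjacent_repeat[OF assms(1,2), of 0 c] by auto
  then show False using assms(4) c by (auto simp: successively_conv_nth)
qed

lemma noncrossing_pair_word_distinct_prefix:
  assumes "noncrossing_word xs" "pair_word xs" "successively (\<noteq>) (take m xs)" "m \<le> length xs"
  shows "distinct (take m xs)"
proof -
  have "xs ! a \<noteq> xs ! b" if ab: "a < b" "b < m" for a b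
  proof
    assume e: "xs ! a = xs ! b"
    have "b < length xs" using ab assms(4) by simp
    then obtain i where i: "a \<le> i \<and> Suc i \<le> b \<and> xs ! i = xs ! Suc i"
      using noncrossing_pair_word_adjacent_repeat[OF assms(1,2) ab(1) _ e] by auto
    have "Suc i < m" using i ab by simp
    then have "xs ! i \<noteq> xs ! Suc i" using assms(3,4) by (simp add: successively_conv_nth)
    then show False using i by simp
  qed
  then show ?thesis using assms(4) by (auto simp: distinct_conv_nth nat_neq_iff)
qed

lemma first_adjacent_repeat: "\<not> successively (\<noteq>) xs \<Longrightarrow> \<exists>ys v zs. xs = ys @ [v, v] @ zs \<and> successively (\<noteq>) (ys @ [v])"
proof (induction xs)
  case Nil then show ?case by simp
next
  case (Cons x xs)
  show ?case
  proof (cases xs)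
    case Nil then show ?thesis using Cons by simp
  next
    case (Cons y r)
    show ?thesis
    proof (cases "x = y")
      case True then show ?thesis using Cons by (intro exI[of _ "[]"]) auto
    next
      case False
      then have "\<not> successively (\<noteq>) xs" using Cons \<open>\<not> successively (\<noteq>) (x # xs)\<close> by simp
      then obtain ys v zs where h: "xs = ys @ [v, v] @ zs" "successively (\<noteq>) (ys @ [v])"
        using Cons.IH by blast
      have "hd (ys @ [v]) = y" using h(1) Cons by (cases ys) auto
      then have "successively (\<noteq>) (x # ys @ [v])" using h(2) False by (simp add: successively_Cons)
      then show ?thesis using h(1) by (intro exI[of _ "x # ys"] exI[of _ v] exI[of _ zs]) simp
    qed
  qed
qed

lemma pair_word_delete_adjacent:
  assumes "pair_word (ys @ [v, v] @ zs)"
  shows "v \<notin> set ys" "v \<notin> set zs" "pair_word (ys @ zs)"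
proof -
  have c: "count_list (ys @ [v, v] @ zs) v = 2" using assms unfolding pair_word_def by simp
  then show "v \<notin> set ys" "v \<notin> set zs" by (auto simp: count_list_0_iff[symmetric])
  show "pair_word (ys @ zs)" unfolding pair_word_def
  proof
    fix w assume w: "w \<in> set (ys @ zs)"
    then have "w \<noteq> v" using \<open>v \<notin> set ys\<close> \<open>v \<notin> set zs\<close> by auto
    moreover have "count_list (ys @ [v, v] @ zs) w = 2" using assms w unfolding pair_word_def by auto
    ultimately show "count_list (ys @ zs) w = 2" by simp
  qed
qed

lemma nth_adjacent_repeat_eq_iff:
  assumes "v \<notin> set ys" "v \<notin> set zs" "q < length (ys @ [v, v] @ zs)"
  shows "(ys @ [v, v] @ zs) ! q = v \<longleftrightarrow> q = length ys \<or> q = Suc (length ys)"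
proof -
  consider "q < length ys" | "q = length ys" | "q = Suc (length ys)" | "Suc (length ys) < q" by linarith
  then show ?thesis
  proof cases
    case 1 then show ?thesis using assms(1) by (auto simp: nth_append)
  next
    case 2 then show ?thesis by (simp add: nth_append)
  next
    case 3 then show ?thesis by (simp add: nth_append)
  next
    case 4
    then have "(ys @ [v, v] @ zs) ! q = zs ! (q - Suc (Suc (length ys)))" by (simp add: nth_append)
    moreover have "q - Suc (Suc (length ys)) < length zs" using 4 assms(3) by simp
    ultimately show ?thesis using assms(2) 4 by (metis nth_mem less_not_refl3 Suc_lessD)
  qed
qed

lemma nth_delete_adjacent_repeat:
  "q < length (ys @ zs) \<Longrightarrow> (ys @ zs) ! q = (ys @ [v, v] @ zs) ! (if q < length ys then q else q + 2)"
  by (auto simp: nth_append)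

lemma noncrossing_word_delete_adjacent:
  assumes "v \<notin> set ys" "v \<notin> set zs"
  shows "noncrossing_word (ys @ [v, v] @ zs) \<longleftrightarrow> noncrossing_word (ys @ zs)"
proof
  let ?xs = "ys @ [v, v] @ zs" and ?ys = "ys @ zs"
  let ?i = "\<lambda>q. if q < length ys then q else q + 2"
  assume nc: "noncrossing_word ?xs"
  show "noncrossing_word ?ys" unfolding noncrossing_word_def
  proof
    assume "\<exists>a b c d. a < b \<and> b < c \<and> c < d \<and> d < length ?ys \<and> ?ys ! a = ?ys ! c \<and> ?ys ! b = ?ys ! d \<and> ?ys ! a \<noteq> ?ys ! b"
    then obtain a b c d where h: "a < b" "b < c" "c < d" "d < length ?ys" "?ys ! a = ?ys ! c" "?ys ! b = ?ys ! d" "?ys ! a \<noteq> ?ys ! b"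
      by blast
    have mono: "?i p < ?i q" if "p < q" for p q using that by auto
    have "?i a < ?i b" "?i b < ?i c" "?i c < ?i d" "?i d < length ?xs" using h mono by auto
    moreover have "?xs ! ?i a = ?xs ! ?i c" "?xs ! ?i b = ?xs ! ?i d" "?xs ! ?i a \<noteq> ?xs ! ?i b"
      using h nth_delete_adjacent_repeat[of _ ys zs v] by (metis less_trans)+
    ultimately show False using nc unfolding noncrossing_word_def by blast
  qed
next
  let ?xs = "ys @ [v, v] @ zs" and ?ys = "ys @ zs"
  let ?j = "\<lambda>q. if q < length ys then q else q - 2"
  assume nc: "noncrossing_word ?ys"
  show "noncrossing_word ?xs" unfolding noncrossing_word_def
  proof
    assume "\<exists>a b c d. a < b \<and> b < c \<and> c < d \<and> d < length ?xs \<and> ?xs ! a = ?xs ! c \<and> ?xs ! b = ?xs ! d \<and> ?xs ! a \<noteq> ?xs ! b"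
    then obtain a b c d where h: "a < b" "b < c" "c < d" "d < length ?xs" "?xs ! a = ?xs ! c" "?xs ! b = ?xs ! d" "?xs ! a \<noteq> ?xs ! b"
      by blast
    have pv: "?xs ! q = v \<longleftrightarrow> q = length ys \<or> q = Suc (length ys)" if "q < length ?xs" for q
      using nth_adjacent_repeat_eq_iff[OF assms that] .
    have na: "?xs ! a \<noteq> v" using pv[of a] pv[of c] h by auto
    have nb: "?xs ! b \<noteq> v" using pv[of b] pv[of d] h by auto
    have out: "q \<noteq> length ys \<and> q \<noteq> Suc (length ys)" if "q < length ?xs" "?xs ! q \<noteq> v" for q
      using pv[OF that(1)] that(2) by auto
    have oa: "a \<noteq> length ys \<and> a \<noteq> Suc (length ys)" using out[of a] na h by auto
    have ob: "b \<noteq> length ys \<and> b \<noteq> Suc (length ys)" using out[of b] nb h by auto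
    have oc: "c \<noteq> length ys \<and> c \<noteq> Suc (length ys)" using out[of c] na h by auto
    have od: "d \<noteq> length ys \<and> d \<noteq> Suc (length ys)" using out[of d] nb h by auto
    have bk: "?xs ! q = ?ys ! (?j q) \<and> ?j q < length ?ys" if "q < length ?xs" "q \<noteq> length ys \<and> q \<noteq> Suc (length ys)" for q
      using that by (auto simp: nth_append)
    have mono: "?j p < ?j q" if "p < q" "p \<noteq> length ys \<and> p \<noteq> Suc (length ys)" "q \<noteq> length ys \<and> q \<noteq> Suc (length ys)" for p q
      using that by auto
    have "?j a < ?j b" "?j b < ?j c" "?j c < ?j d" "?j d < length ?ys"
      using mono oa ob oc od h bk[of d] by auto
    moreover have "?ys ! ?j a = ?ys ! ?j c" "?ys ! ?j b = ?ys ! ?j d" "?ys ! ?j a \<noteq> ?ys ! ?j b"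
      using h bk[of a] bk[of b] bk[of c] bk[of d] oa ob oc od by auto
    ultimately show False using nc unfolding noncrossing_word_def by blast
  qed
qed

lemma count_list_distinct: "distinct t \<Longrightarrow> x \<in> set t \<Longrightarrow> count_list t x = 1"
  by (induction t) auto

lemma once_letters_distinct: "distinct t \<Longrightarrow> once_letters t = t"
  unfolding once_letters_def by (rule filter_True) (simp add: count_list_distinct)

lemma once_letters_delete_adjacent:
  assumes "v \<notin> set ys" "v \<notin> set zs"
  shows "once_letters (ys @ [v, v] @ zs) = once_letters (ys @ zs)"
proof -
  have e: "count_list (ys @ [v, v] @ zs) x = count_list (ys @ zs) x" if "x \<noteq> v" for x
    using that by simp
  have "once_letters (ys @ [v, v] @ zs) = filter (\<lambda>x. count_list (ys @ [v, v] @ zs) x = 1) ys @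
     filter (\<lambda>x. count_list (ys @ [v, v] @ zs) x = 1) [v, v] @ filter (\<lambda>x. count_list (ys @ [v, v] @ zs) x = 1) zs"
    by (simp add: once_letters_def)
  also have "filter (\<lambda>x. count_list (ys @ [v, v] @ zs) x = 1) [v, v] = []" by simp
  also have "filter (\<lambda>x. count_list (ys @ [v, v] @ zs) x = 1) ys = filter (\<lambda>x. count_list (ys @ zs) x = 1) ys"
    using assms(1) e by (intro filter_cong) auto
  also have "filter (\<lambda>x. count_list (ys @ [v, v] @ zs) x = 1) zs = filter (\<lambda>x. count_list (ys @ zs) x = 1) zs"
    using assms(2) e by (intro filter_cong) auto
  finally show ?thesis by (simp add: once_letters_def)
qed

lemma open_stacks_delete_adjacent:
  assumes "distinct ys" "v \<notin> set ys" "v \<notin> set zs"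
  shows "open_stacks (ys @ [v, v] @ zs) = open_stacks (ys @ zs) \<union> {ys @ [v], ys}"
proof -
  let ?xs = "ys @ [v, v] @ zs" and ?ys = "ys @ zs" and ?j = "length ys"
  let ?S = "\<lambda>w p. once_letters (take (Suc p) w)"
  have early: "?S ?xs p = ?S ?ys p" if "p < ?j" for p using that by simp
  have at_v: "?S ?xs ?j = ys @ [v]"
    using assms by (simp add: once_letters_distinct)
  have after_v: "?S ?xs (Suc ?j) = ys"
    using once_letters_delete_adjacent[of v ys "[]"] assms by (simp add: once_letters_distinct)
  have late: "?S ?xs (Suc (Suc (?j + q))) = ?S ?ys (?j + q)" for q
  proof -
    have "take (Suc (Suc (Suc (?j + q)))) ?xs = ys @ [v, v] @ take (Suc q) zs"
      by (simp add: take_append numeral_3_eq_3)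
    then show ?thesis
      using once_letters_delete_adjacent[of v ys "take (Suc q) zs"] assms by (auto dest: in_set_takeD)
  qed
  show ?thesis
  proof (intro equalityI subsetI)
    fix L assume "L \<in> open_stacks ?xs"
    then obtain p where p: "p < length ?xs" "L = ?S ?xs p" unfolding open_stacks_def by blast
    consider "p < ?j" | "p = ?j" | "p = Suc ?j" | "Suc (Suc ?j) \<le> p" by linarith
    then show "L \<in> open_stacks ?ys \<union> {ys @ [v], ys}"
    proof cases
      case 1
      then have "L = ?S ?ys p" "p < length ?ys" using p early by auto
      then show ?thesis unfolding open_stacks_def by blast
    next
      case 2 then show ?thesis using p at_v by simp
    next
      case 3 then show ?thesis using p after_v by simp
    next
      case 4
      define q where "q = p - Suc (Suc ?j)"
      have "p = Suc (Suc (?j + q))" "q < length zs" using 4 p(1) unfolding q_def by auto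
      then have "L = ?S ?ys (?j + q)" "?j + q < length ?ys" using p late by auto
      then show ?thesis unfolding open_stacks_def by blast
    qed
  next
    fix L assume L: "L \<in> open_stacks ?ys \<union> {ys @ [v], ys}"
    have "ys @ [v] \<in> open_stacks ?xs"
      unfolding open_stacks_def using at_v by (intro image_eqI[of _ _ ?j]) auto
    moreover have "ys \<in> open_stacks ?xs"
      unfolding open_stacks_def using after_v by (intro image_eqI[of _ _ "Suc ?j"]) auto
    moreover have "?S ?ys p \<in> open_stacks ?xs" if "p < length ?ys" for p
    proof (cases "p < ?j")
      case True then show ?thesis using early[OF True] that unfolding open_stacks_def
        by (intro image_eqI[of _ _ p]) auto
    next
      case False
      define q where "q = p - ?j"
      have "p = ?j + q" "q < length zs" using False that unfolding q_def by auto
      then show ?thesis using late[of q] unfolding open_stacks_def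
        by (intro image_eqI[of _ _ "Suc (Suc (?j + q))"]) auto
    qed
    ultimately show "L \<in> open_stacks ?xs" using L unfolding open_stacks_def by auto
  qed
qed

lemma vmono_word_delete_adjacent:
  assumes "distinct ys" "v \<notin> set ys" "v \<notin> set zs"
  shows "vmono_word (ys @ [v, v] @ zs) \<longleftrightarrow> vseq (ys @ [v]) \<and> vmono_word (ys @ zs)"
proof -
  have "ys = [] \<or> vseq ys" if "vseq (ys @ [v])"
    using vseq_take[OF that, of "length ys"] by auto
  then show ?thesis
    unfolding vmono_word_def open_stacks_delete_adjacent[OF assms] by auto
qed

declare upt_Suc[simp del]

definition occs :: "nat list \<Rightarrow> nat \<Rightarrow> nat set" where
  "occs s x = {q. q < length s \<and> s ! q = x}"

definition first_occ :: "nat list \<Rightarrow> nat \<Rightarrow> nat" where "first_occ s x = Min (occs s x)"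

definition last_occ :: "nat list \<Rightarrow> nat \<Rightarrow> nat" where "last_occ s x = Max (occs s x)"

lemma card_occs: "card (occs s x) = count_list s x"
  unfolding occs_def count_list_eq_length_filter length_filter_conv_card by (simp add: eq_commute)

lemma occs_pair_word:
  assumes "pair_word s" "x \<in> set s"
  shows "occs s x = {first_occ s x, last_occ s x}" "first_occ s x < last_occ s x"
proof -
  have "card (occs s x) = 2" using assms card_occs unfolding pair_word_def by simp
  then obtain a b where ab: "occs s x = {a, b}" "a \<noteq> b" unfolding card_2_iff by blast
  then show "occs s x = {first_occ s x, last_occ s x}" "first_occ s x < last_occ s x" unfolding first_occ_def last_occ_def
    by (auto simp: min_def max_def)
qed

lemma nth_eq_iff_first_last_occ:
  assumes "pair_word s" "x \<in> set s" "q < length s"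
  shows "s ! q = x \<longleftrightarrow> q = first_occ s x \<or> q = last_occ s x"
  using occs_pair_word[OF assms(1,2)] assms(3) unfolding occs_def by blast

lemma first_last_occ:
  assumes "pair_word s" "x \<in> set s"
  shows "first_occ s x < length s" "last_occ s x < length s" "s ! first_occ s x = x" "s ! last_occ s x = x"
  using occs_pair_word[OF assms] unfolding occs_def by blast+

lemma count_list_take_occs:
  assumes "p < length s"
  shows "count_list (take (Suc p) s) x = card (occs s x \<inter> {..p})"
proof -
  have "count_list (take (Suc p) s) x = card {i. i < length (take (Suc p) s) \<and> x = take (Suc p) s ! i}"
    unfolding count_list_eq_length_filter length_filter_conv_card by simp
  also have "{i. i < length (take (Suc p) s) \<and> x = take (Suc p) s ! i} = occs s x \<inter> {..p}"
    using assms unfolding occs_def by auto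
  finally show ?thesis .
qed

lemma count_list_take_eq_1_iff:
  assumes "pair_word s" "q \<le> p" "p < length s"
  shows "count_list (take (Suc p) s) (s ! q) = 1 \<longleftrightarrow> q = first_occ s (s ! q) \<and> p < last_occ s (s ! q)"
proof -
  let ?x = "s ! q"
  have x: "?x \<in> set s" using assms by auto
  note word_prod = occs_pair_word[OF assms(1) x]
  have "q < length s" using assms by simp
  then have q: "q = first_occ s ?x \<or> q = last_occ s ?x" using nth_eq_iff_first_last_occ[OF assms(1) x, of q] by simp
  have c: "count_list (take (Suc p) s) ?x = card ({first_occ s ?x, last_occ s ?x} \<inter> {..p})"
    using count_list_take_occs[OF assms(3)] word_prod(1) by simp
  show ?thesis
  proof (cases "last_occ s ?x \<le> p")
    case True
    then have "{first_occ s ?x, last_occ s ?x} \<inter> {..p} = {first_occ s ?x, last_occ s ?x}" using word_prod(2) by auto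
    then show ?thesis using c word_prod(2) True by auto
  next
    case False
    then have "{first_occ s ?x, last_occ s ?x} \<inter> {..p} = {first_occ s ?x}" using word_prod(2) q assms(2) by auto
    then show ?thesis using c False q assms(2) by auto
  qed
qed

lemma once_letters_take_conv_filter:
  assumes "pair_word s" "p < length s"
  shows "once_letters (take (Suc p) s) = map ((!) s) (filter (\<lambda>q. q = first_occ s (s ! q) \<and> p < last_occ s (s ! q)) [0..<Suc p])"
proof -
  have t: "take (Suc p) s = map ((!) s) [0..<Suc p]"
    using assms(2) by (intro nth_equalityI) auto
  have "once_letters (take (Suc p) s) = filter (\<lambda>x. count_list (take (Suc p) s) x = 1) (map ((!) s) [0..<Suc p])"
    unfolding once_letters_def by (subst (2) t) (rule refl)
  also have "\<dots> = map ((!) s) (filter (\<lambda>q. count_list (take (Suc p) s) (s ! q) = 1) [0..<Suc p])"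
    by (simp add: filter_map comp_def)
  also have "filter (\<lambda>q. count_list (take (Suc p) s) (s ! q) = 1) [0..<Suc p]
           = filter (\<lambda>q. q = first_occ s (s ! q) \<and> p < last_occ s (s ! q)) [0..<Suc p]"
    using count_list_take_eq_1_iff[OF assms(1) _ assms(2)] by (intro filter_cong) auto
  finally show ?thesis .
qed

text \<open>For letters of a pair word, encloses s w v says that the pair of w surrounds that of v;
  these are the blocks B' < B of a pair partition.\<close>

definition encloses :: "nat list \<Rightarrow> nat \<Rightarrow> nat \<Rightarrow> bool" where
  "encloses s w v \<longleftrightarrow> first_occ s w < first_occ s v \<and> last_occ s v < last_occ s w"

definition nearest_encloses :: "nat list \<Rightarrow> nat \<Rightarrow> nat \<Rightarrow> bool" where
  "nearest_encloses s w v \<longleftrightarrow> encloses s w v \<and> \<not> (\<exists>x\<in>set s. encloses s w x \<and> encloses s x v)"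

definition vmono_chains :: "nat list \<Rightarrow> bool" where
  "vmono_chains s \<longleftrightarrow> (\<forall>vs. vs \<noteq> [] \<and> set vs \<subseteq> set s \<and> (\<forall>k. Suc k < length vs \<longrightarrow> nearest_encloses s (vs ! Suc k) (vs ! k)) \<longrightarrow> vseq vs)"

lemma noncrossing_nested:
  assumes "noncrossing_word s" "pair_word s" "a \<in> set s" "b \<in> set s" "a \<noteq> b" "first_occ s a < first_occ s b" "first_occ s b < last_occ s a"
  shows "last_occ s b < last_occ s a"
proof (rule ccontr)
  assume "\<not> ?thesis"
  moreover have "last_occ s b \<noteq> last_occ s a" using first_last_occ[OF assms(2,3)] first_last_occ[OF assms(2,4)] assms(5) by metis
  ultimately have "last_occ s a < last_occ s b" by simp
  then have "first_occ s a < first_occ s b \<and> first_occ s b < last_occ s a \<and> last_occ s a < last_occ s b \<and> last_occ s b < length s \<and>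
     s ! first_occ s a = s ! last_occ s a \<and> s ! first_occ s b = s ! last_occ s b \<and> s ! first_occ s a \<noteq> s ! first_occ s b"
    using assms first_last_occ[OF assms(2,3)] first_last_occ[OF assms(2,4)] by simp
  then show False using assms(1) unfolding noncrossing_word_def by blast
qed

lemma in_once_letters_take_iff:
  assumes "pair_word s" "p < length s"
  shows "x \<in> set (once_letters (take (Suc p) s)) \<longleftrightarrow> x \<in> set s \<and> first_occ s x \<le> p \<and> p < last_occ s x"
proof
  assume "x \<in> set (once_letters (take (Suc p) s))"
  then obtain q where q: "q < Suc p" "q = first_occ s (s ! q)" "p < last_occ s (s ! q)" "x = s ! q"
    unfolding once_letters_take_conv_filter[OF assms] by auto
  then show "x \<in> set s \<and> first_occ s x \<le> p \<and> p < last_occ s x" using assms(2) by auto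
next
  assume h: "x \<in> set s \<and> first_occ s x \<le> p \<and> p < last_occ s x"
  then have "s ! first_occ s x = x" using first_last_occ[OF assms(1)] by blast
  then show "x \<in> set (once_letters (take (Suc p) s))" unfolding once_letters_take_conv_filter[OF assms] using h
    by (auto intro!: image_eqI[of _ _ "first_occ s x"])
qed

lemma sorted_once_letters_take:
  assumes "pair_word s" "p < length s"
  shows "sorted_wrt (\<lambda>x y. first_occ s x < first_occ s y) (once_letters (take (Suc p) s))"
proof -
  let ?Q = "filter (\<lambda>q. q = first_occ s (s ! q) \<and> p < last_occ s (s ! q)) [0..<Suc p]"
  have "sorted_wrt (<) ?Q" by (rule sorted_wrt_filter) (rule sorted_wrt_upt)
  then have "sorted_wrt (\<lambda>q q'. first_occ s (s ! q) < first_occ s (s ! q')) ?Q"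
  proof (rule sorted_wrt_mono_rel[rotated])
    fix x y assume "x \<in> set ?Q" "y \<in> set ?Q" "x < y"
    then show "first_occ s (s ! x) < first_occ s (s ! y)" by auto
  qed
  then show ?thesis unfolding once_letters_take_conv_filter[OF assms] by (simp add: sorted_wrt_map)
qed

lemma first_occ_once_letters_less_iff:
  assumes "pair_word s" "p < length s" "i < length (once_letters (take (Suc p) s))" "j < length (once_letters (take (Suc p) s))"
  shows "first_occ s (once_letters (take (Suc p) s) ! i) < first_occ s (once_letters (take (Suc p) s) ! j) \<longleftrightarrow> i < j"
proof -
  let ?L = "once_letters (take (Suc p) s)"
  have S: "\<And>i j. i < j \<Longrightarrow> j < length ?L \<Longrightarrow> first_occ s (?L ! i) < first_occ s (?L ! j)"
    using sorted_once_letters_take[OF assms(1,2)] unfolding sorted_wrt_iff_nth_less by blast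
  show ?thesis
  proof
    assume "first_occ s (?L ! i) < first_occ s (?L ! j)"
    then show "i < j" using S[of j i] assms(3) by (metis less_asym' nat_neq_iff)
  qed (use S assms in auto)
qed

lemma nearest_encloses_once_letters_Suc:
  assumes "noncrossing_word s" "pair_word s" "p < length s" "Suc i < length (once_letters (take (Suc p) s))"
  shows "nearest_encloses s (once_letters (take (Suc p) s) ! i) (once_letters (take (Suc p) s) ! Suc i)"
proof -
  let ?L = "once_letters (take (Suc p) s)"
  let ?a = "?L ! i" and ?b = "?L ! Suc i"
  have ain: "?a \<in> set ?L" "?b \<in> set ?L" using assms(4) by auto
  note La = in_once_letters_take_iff[OF assms(2,3), THEN iffD1, OF ain(1)]
  note Lb = in_once_letters_take_iff[OF assms(2,3), THEN iffD1, OF ain(2)]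
  have fab: "first_occ s ?a < first_occ s ?b" using first_occ_once_letters_less_iff[OF assms(2,3), of i "Suc i"] assms(4) by simp
  have ne: "?a \<noteq> ?b" using fab by auto
  have lab: "last_occ s ?b < last_occ s ?a" using noncrossing_nested[OF assms(1,2)] La Lb ne fab by simp
  have enc: "encloses s ?a ?b" unfolding encloses_def using fab lab by simp
  have "\<not> (\<exists>x\<in>set s. encloses s ?a x \<and> encloses s x ?b)"
  proof
    assume "\<exists>x\<in>set s. encloses s ?a x \<and> encloses s x ?b"
    then obtain x where x: "x \<in> set s" "encloses s ?a x" "encloses s x ?b" by blast
    have "first_occ s x \<le> p" "p < last_occ s x" using x Lb unfolding encloses_def by auto
    then have "x \<in> set ?L" using in_once_letters_take_iff[OF assms(2,3)] x(1) by blast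
    then obtain m where m: "m < length ?L" "?L ! m = x" by (metis in_set_conv_nth)
    have "i < m" using first_occ_once_letters_less_iff[OF assms(2,3), of i m] x(2) m assms(4) unfolding encloses_def by simp
    moreover have "m < Suc i" using first_occ_once_letters_less_iff[OF assms(2,3), of m "Suc i"] x(3) m assms(4) unfolding encloses_def by simp
    ultimately show False by simp
  qed
  then show ?thesis using enc unfolding nearest_encloses_def by simp
qed

lemma vmono_chains_imp_vmono_word:
  assumes "noncrossing_word s" "pair_word s" "vmono_chains s"
  shows "vmono_word s"
  unfolding vmono_word_def open_stacks_def
proof (intro ballI)
  fix L assume "L \<in> (\<lambda>p. once_letters (take (Suc p) s)) ` {..<length s}"
  then obtain p where p: "p < length s" and L: "L = once_letters (take (Suc p) s)" by auto
  show "L = [] \<or> vseq L"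
  proof (cases "L = []")
    case False
    have c2: "set (rev L) \<subseteq> set s" using in_once_letters_take_iff[OF assms(2) p] L by auto
    have c3: "\<forall>k. Suc k < length (rev L) \<longrightarrow> nearest_encloses s (rev L ! Suc k) (rev L ! k)"
    proof (intro allI impI)
      fix k assume k: "Suc k < length (rev L)"
      let ?i = "length L - Suc (Suc k)"
      have e1: "rev L ! Suc k = L ! ?i" using k by (simp add: rev_nth)
      have e2: "rev L ! k = L ! Suc ?i" using k by (simp add: rev_nth Suc_diff_Suc)
      have "Suc ?i < length L" using k by simp
      then have "nearest_encloses s (L ! ?i) (L ! Suc ?i)"
        unfolding L by (rule nearest_encloses_once_letters_Suc[OF assms(1,2) p])
      then show "nearest_encloses s (rev L ! Suc k) (rev L ! k)" unfolding e1 e2 .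
    qed
    have "vseq (rev L)" using assms(3) False c2 c3 unfolding vmono_chains_def by blast
    then show ?thesis by (simp add: vseq_rev_iff)
  qed simp
qed

lemma nearest_encloses_once_letters_imp_Suc:
  assumes NC: "noncrossing_word s" and pw: "pair_word s" and p: "p < length s"
    and i: "i < length (once_letters (take (Suc p) s))"
    and j: "j < length (once_letters (take (Suc p) s))"
    and nw: "nearest_encloses s (once_letters (take (Suc p) s) ! i) (once_letters (take (Suc p) s) ! j)"
  shows "j = Suc i"
proof (rule ccontr)
  let ?L = "once_letters (take (Suc p) s)"
  let ?a = "?L ! i" and ?b = "?L ! j"
  have e: "encloses s ?a ?b" using nw unfolding nearest_encloses_def by blast
  have lt: "i < j" using first_occ_once_letters_less_iff[OF pw p i j] e unfolding encloses_def by simp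
  assume "j \<noteq> Suc i"
  then have lt2: "Suc i < j" using lt by simp
  let ?x = "?L ! Suc i"
  have xl: "Suc i < length ?L" using lt2 j by simp
  have xs: "?x \<in> set s" "first_occ s ?x \<le> p" "p < last_occ s ?x"
    using in_once_letters_take_iff[OF pw p, THEN iffD1, OF nth_mem[OF xl]] by auto
  have as: "?a \<in> set s" "first_occ s ?a \<le> p" "p < last_occ s ?a"
    using in_once_letters_take_iff[OF pw p, THEN iffD1, OF nth_mem[OF i]] by auto
  have bs: "?b \<in> set s" "first_occ s ?b \<le> p" "p < last_occ s ?b"
    using in_once_letters_take_iff[OF pw p, THEN iffD1, OF nth_mem[OF j]] by auto
  have f1: "first_occ s ?a < first_occ s ?x" using first_occ_once_letters_less_iff[OF pw p i xl] by simp
  have f2: "first_occ s ?x < first_occ s ?b" using first_occ_once_letters_less_iff[OF pw p xl j] lt2 by simp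
  have "last_occ s ?x < last_occ s ?a"
    using noncrossing_nested[OF NC pw as(1) xs(1) _ f1] f1 xs as by fastforce
  then have e1: "encloses s ?a ?x" using f1 unfolding encloses_def by simp
  have "last_occ s ?b < last_occ s ?x"
    using noncrossing_nested[OF NC pw xs(1) bs(1) _ f2] f2 xs bs by fastforce
  then have e2: "encloses s ?x ?b" using f2 unfolding encloses_def by simp
  show False using nw e1 e2 xs(1) unfolding nearest_encloses_def by blast
qed

lemma rev_eq_take_drop_if_consecutive_indices:
  assumes ne: "vs \<noteq> []"
    and g: "\<And>k. k < length vs \<Longrightarrow> g k < length L \<and> L ! g k = vs ! k"
    and step: "\<And>k. Suc k < length vs \<Longrightarrow> Suc (g (Suc k)) = g k"
  shows "rev vs = take (length vs) (drop (g (length vs - 1)) L)"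
proof -
  let ?n = "length vs"
  have gk: "g k + k = g 0" if "k < ?n" for k
    using that
  proof (induction k)
    case (Suc k)
    then show ?case using step[of k] by simp
  qed simp
  have g0: "g 0 < length L" using g ne by auto
  show ?thesis
  proof (rule nth_equalityI)
    show "length (rev vs) = length (take ?n (drop (g (?n - 1)) L))"
      using g0 gk[of "?n - 1"] ne by simp
  next
    fix i assume i: "i < length (rev vs)"
    have "rev vs ! i = L ! g (?n - 1 - i)" using g[of "?n - 1 - i"] i by (simp add: rev_nth)
    also have "g (?n - 1 - i) = g (?n - 1) + i"
    proof -
      have "g (?n - 1 - i) + (?n - 1 - i) = g 0" by (rule gk) (use i in simp)
      moreover have "g (?n - 1) + (?n - 1) = g 0" by (rule gk) (use ne in simp)
      moreover have "i < ?n" using i by simp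
      ultimately show ?thesis by arith
    qed
    finally show "rev vs ! i = take ?n (drop (g (?n - 1)) L) ! i"
      using i g[of "?n - 1"] ne by simp
  qed
qed

lemma vmono_word_imp_vmono_chains:
  assumes NC: "noncrossing_word s" and pw: "pair_word s" and vm: "vmono_word s"
  shows "vmono_chains s"
  unfolding vmono_chains_def
proof (intro allI impI, elim conjE)
  fix vs assume ne: "vs \<noteq> []" and sub: "set vs \<subseteq> set s"
    and ch: "\<forall>k. Suc k < length vs \<longrightarrow> nearest_encloses s (vs ! Suc k) (vs ! k)"
  let ?p = "first_occ s (vs ! 0)"
  have v0: "vs ! 0 \<in> set s" using ne sub by auto
  have p: "?p < length s" using first_last_occ[OF pw v0] by simp
  let ?L = "once_letters (take (Suc ?p) s)"
  have inL: "vs ! k \<in> set ?L \<and> last_occ s (vs ! 0) \<le> last_occ s (vs ! k)" if "k < length vs" for k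
    using that
  proof (induction k)
    case 0
    then show ?case using in_once_letters_take_iff[OF pw p] v0 occs_pair_word[OF pw v0] by simp
  next
    case (Suc k)
    have "encloses s (vs ! Suc k) (vs ! k)" using ch Suc(2) unfolding nearest_encloses_def by blast
    moreover have "vs ! Suc k \<in> set s" using Suc(2) sub by auto
    moreover have "?p < last_occ s (vs ! 0)" using occs_pair_word[OF pw v0] by simp
    ultimately show ?case using Suc in_once_letters_take_iff[OF pw p] unfolding encloses_def by auto
  qed
  then have "\<forall>k<length vs. \<exists>m<length ?L. ?L ! m = vs ! k" by (metis in_set_conv_nth)
  then obtain g where g: "\<And>k. k < length vs \<Longrightarrow> g k < length ?L \<and> ?L ! g k = vs ! k" by metis
  have "Suc (g (Suc k)) = g k" if "Suc k < length vs" for k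
    using nearest_encloses_once_letters_imp_Suc[OF NC pw p, of "g (Suc k)" "g k"] g[of k] g[of "Suc k"]
      ch that by simp
  then have R: "rev vs = take (length vs) (drop (g (length vs - 1)) ?L)"
    using rev_eq_take_drop_if_consecutive_indices[OF ne g] by blast
  have "?L \<in> open_stacks s" unfolding open_stacks_def using p by blast
  moreover have "?L \<noteq> []" using g ne by fastforce
  ultimately have "vseq ?L" using vm unfolding vmono_word_def by blast
  then have "vseq (rev vs)" unfolding R by (rule vseq_take_drop) (use R ne in \<open>metis Nil_is_rev_conv\<close>)
  then show "vseq vs" by (simp add: vseq_rev_iff)
qed

lemma vmono_word_iff_vmono_chains:
  "noncrossing_word s \<Longrightarrow> pair_word s \<Longrightarrow> vmono_word s \<longleftrightarrow> vmono_chains s"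
  using vmono_word_imp_vmono_chains vmono_chains_imp_vmono_word by blast

section \<open>Pair words and labeled pair partitions\<close>

text \<open>Position q of a word is the point q + 1 of the partitioned set {1..2k}.\<close>

definition letter_block :: "nat list \<Rightarrow> nat \<Rightarrow> nat set" where "letter_block s x = Suc ` occs s x"

definition block_label :: "nat list \<Rightarrow> nat set \<Rightarrow> nat" where
  "block_label s = restrict (\<lambda>B. s ! (Min B - 1)) (letter_block s ` set s)"

lemma letter_block_eq: "pair_word s \<Longrightarrow> x \<in> set s \<Longrightarrow> letter_block s x = {Suc (first_occ s x), Suc (last_occ s x)}"
  unfolding letter_block_def using occs_pair_word by simp

lemma Suc_in_letter_block_iff: "Suc q \<in> letter_block s x \<longleftrightarrow> q < length s \<and> s ! q = x"
  unfolding letter_block_def occs_def by auto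

lemma block_label_letter_block:
  assumes "pair_word s" "x \<in> set s"
  shows "block_label s (letter_block s x) = x"
proof -
  have "Min (letter_block s x) = Suc (first_occ s x)" using letter_block_eq[OF assms] occs_pair_word[OF assms] by simp
  then show ?thesis using assms first_last_occ[OF assms] unfolding block_label_def by simp
qed

lemma block_lt_pair:
  assumes "P < P'" "Q < Q'"
  shows "block_lt {P, P'} {Q, Q'} \<longleftrightarrow> P < Q \<and> Q' < P'"
proof
  assume "block_lt {P, P'} {Q, Q'}"
  then obtain p p' where h: "p \<in> {P, P'}" "p' \<in> {P, P'}" "p < p'" "\<forall>k\<in>{Q, Q'}. p < k \<and> k < p'"
    unfolding block_lt_def by blast
  then have "p = P" "p' = P'" using assms by auto
  then show "P < Q \<and> Q' < P'" using h(4) by auto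
next
  assume "P < Q \<and> Q' < P'"
  then show "block_lt {P, P'} {Q, Q'}" unfolding block_lt_def using assms
    by (intro exI[of _ P] exI[of _ P']) auto
qed

lemma block_lt_letter_block_iff:
  assumes "pair_word s" "w \<in> set s" "v \<in> set s"
  shows "block_lt (letter_block s w) (letter_block s v) \<longleftrightarrow> encloses s w v"
  unfolding letter_block_eq[OF assms(1,2)] letter_block_eq[OF assms(1,3)] encloses_def
  using block_lt_pair[of "Suc (first_occ s w)" "Suc (last_occ s w)" "Suc (first_occ s v)" "Suc (last_occ s v)"]
    occs_pair_word[OF assms(1,2)] occs_pair_word[OF assms(1,3)] by simp

lemma nearest_outer_letter_block_iff:
  assumes "pair_word s" "w \<in> set s" "v \<in> set s"
  shows "nearest_outer (letter_block s ` set s) (letter_block s w) (letter_block s v) \<longleftrightarrow> nearest_encloses s w v"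
  unfolding nearest_outer_def nearest_encloses_def using block_lt_letter_block_iff[OF assms(1)] assms by auto

lemma vmono_labeling_iff_vmono_chains:
  assumes pw: "pair_word s"
  shows "vmono_labeling (letter_block s ` set s) (block_label s) \<longleftrightarrow> vmono_chains s"
proof
  assume vm: "vmono_labeling (letter_block s ` set s) (block_label s)"
  show "vmono_chains s" unfolding vmono_chains_def
  proof (intro allI impI, elim conjE)
    fix vs assume ne: "vs \<noteq> []" and sub: "set vs \<subseteq> set s"
      and ch: "\<forall>k. Suc k < length vs \<longrightarrow> nearest_encloses s (vs ! Suc k) (vs ! k)"
    let ?Bs = "map (letter_block s) vs"
    have "?Bs \<noteq> []" "set ?Bs \<subseteq> letter_block s ` set s" using ne sub by auto
    moreover have "\<forall>k. Suc k < length ?Bs \<longrightarrow> nearest_outer (letter_block s ` set s) (?Bs ! Suc k) (?Bs ! k)"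
      using ch nearest_outer_letter_block_iff[OF pw] sub by (auto simp: subset_iff)
    ultimately have "vseq (map (block_label s) ?Bs)" using vm unfolding vmono_labeling_def by blast
    moreover have "map (block_label s) ?Bs = vs" using block_label_letter_block[OF pw] sub by (induction vs) auto
    ultimately show "vseq vs" by simp
  qed
next
  assume vc: "vmono_chains s"
  show "vmono_labeling (letter_block s ` set s) (block_label s)" unfolding vmono_labeling_def
  proof (intro allI impI, elim conjE)
    fix Bs assume ne: "Bs \<noteq> []" and sub: "set Bs \<subseteq> letter_block s ` set s"
      and ch: "\<forall>k. Suc k < length Bs \<longrightarrow> nearest_outer (letter_block s ` set s) (Bs ! Suc k) (Bs ! k)"
    let ?vs = "map (block_label s) Bs"
    have bb: "letter_block s (block_label s B) = B" "block_label s B \<in> set s" if "B \<in> set Bs" for B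
      using that sub block_label_letter_block[OF pw] by auto
    have Bs: "Bs = map (letter_block s) ?vs" using bb by (induction Bs) auto
    have "?vs \<noteq> []" "set ?vs \<subseteq> set s" using ne bb by auto
    moreover have "\<forall>k. Suc k < length ?vs \<longrightarrow> nearest_encloses s (?vs ! Suc k) (?vs ! k)"
    proof (intro allI impI)
      fix k assume k: "Suc k < length ?vs"
      have m: "Bs ! Suc k \<in> set Bs" "Bs ! k \<in> set Bs" using k by auto
      have "nearest_outer (letter_block s ` set s) (Bs ! Suc k) (Bs ! k)" using ch k by simp
      then have "nearest_outer (letter_block s ` set s) (letter_block s (block_label s (Bs ! Suc k))) (letter_block s (block_label s (Bs ! k)))"
        using bb m by simp
      then have "nearest_encloses s (block_label s (Bs ! Suc k)) (block_label s (Bs ! k))"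
        using nearest_outer_letter_block_iff[OF pw, of "block_label s (Bs ! Suc k)" "block_label s (Bs ! k)"] bb(2)[OF m(1)] bb(2)[OF m(2)] by simp
      then show "nearest_encloses s (?vs ! Suc k) (?vs ! k)" using k by simp
    qed
    ultimately show "vseq (map (block_label s) Bs)" using vc unfolding vmono_chains_def by blast
  qed
qed

lemma noncrossing_iff_noncrossing_word:
  assumes pw: "pair_word s"
  shows "noncrossing (letter_block s ` set s) \<longleftrightarrow> noncrossing_word s"
proof
  assume nc: "noncrossing (letter_block s ` set s)"
  show "noncrossing_word s" unfolding noncrossing_word_def
  proof
    assume "\<exists>a b c d. a < b \<and> b < c \<and> c < d \<and> d < length s \<and> s ! a = s ! c \<and> s ! b = s ! d \<and> s ! a \<noteq> s ! b"
    then obtain a b c d where h: "a < b" "b < c" "c < d" "d < length s" "s ! a = s ! c" "s ! b = s ! d" "s ! a \<noteq> s ! b"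
      by blast
    let ?B = "letter_block s (s ! a)" and ?B' = "letter_block s (s ! b)"
    have in1: "?B \<in> letter_block s ` set s" "?B' \<in> letter_block s ` set s" using h by auto
    have "Suc b \<in> ?B'" using Suc_in_letter_block_iff h by simp
    moreover have "Suc b \<notin> ?B" using Suc_in_letter_block_iff h by simp
    ultimately have "?B \<noteq> ?B'" by blast
    moreover have "Suc a \<in> ?B" "Suc c \<in> ?B" "Suc b \<in> ?B'" "Suc d \<in> ?B'" using Suc_in_letter_block_iff h by auto
    ultimately show False using nc in1 h unfolding noncrossing_def
      by (metis Suc_mono)
  qed
next
  assume nc: "noncrossing_word s"
  show "noncrossing (letter_block s ` set s)" unfolding noncrossing_def
  proof (intro ballI impI notI)
    fix B B' assume B: "B \<in> letter_block s ` set s" and B': "B' \<in> letter_block s ` set s" and ne: "B \<noteq> B'"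
    assume "\<exists>a b c d. a < b \<and> b < c \<and> c < d \<and> a \<in> B \<and> c \<in> B \<and> b \<in> B' \<and> d \<in> B'"
    then obtain a b c d where h: "a < b" "b < c" "c < d" "a \<in> B" "c \<in> B" "b \<in> B'" "d \<in> B'" by blast
    obtain x y where xy: "x \<in> set s" "B = letter_block s x" "y \<in> set s" "B' = letter_block s y" using B B' by auto
    have occs: "\<And>t z. t \<in> letter_block s z \<Longrightarrow> \<exists>q. t = Suc q \<and> q < length s \<and> s ! q = z"
      unfolding letter_block_def occs_def by auto
    obtain qa qb qc qd where q: "a = Suc qa" "qa < length s" "s ! qa = x"
      "b = Suc qb" "qb < length s" "s ! qb = y" "c = Suc qc" "qc < length s" "s ! qc = x"
      "d = Suc qd" "qd < length s" "s ! qd = y"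
      using occs[of a x] occs[of b y] occs[of c x] occs[of d y] h xy by metis
    have "x \<noteq> y" using ne xy by auto
    then have "qa < qb \<and> qb < qc \<and> qc < qd \<and> qd < length s \<and> s ! qa = s ! qc \<and> s ! qb = s ! qd \<and> s ! qa \<noteq> s ! qb"
      using q h by auto
    then show False using nc unfolding noncrossing_word_def by blast
  qed
qed

definition std_pair_words :: "nat \<Rightarrow> nat list set" where
  "std_pair_words k = {s. length s = 2 * k \<and> set s = {1..k} \<and> pair_word s}"

definition block_of :: "nat set set \<Rightarrow> nat \<Rightarrow> nat set" where
  "block_of \<pi> q = (THE B. B \<in> \<pi> \<and> Suc q \<in> B)"

definition word_of_partition :: "nat \<Rightarrow> nat set set \<times> (nat set \<Rightarrow> nat) \<Rightarrow> nat list" where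
  "word_of_partition k pf = map (\<lambda>q. snd pf (block_of (fst pf) q)) [0..<2 * k]"

definition partition_of_word :: "nat list \<Rightarrow> nat set set \<times> (nat set \<Rightarrow> nat)" where
  "partition_of_word s = (letter_block s ` set s, block_label s)"

lemma block_of_eq:
  assumes "partition_on A \<pi>" "B \<in> \<pi>" "Suc q \<in> B"
  shows "block_of \<pi> q = B"
  unfolding block_of_def
proof (rule the_equality)
  show "B \<in> \<pi> \<and> Suc q \<in> B" using assms by simp
next
  fix B' assume "B' \<in> \<pi> \<and> Suc q \<in> B'"
  then show "B' = B" using partition_onD2[OF assms(1)] assms(2,3) disjointD by blast
qed

lemma block_of_mem:
  assumes "partition_on A \<pi>" "Suc q \<in> A"
  shows "block_of \<pi> q \<in> \<pi> \<and> Suc q \<in> block_of \<pi> q"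
proof -
  obtain B where "B \<in> \<pi>" "Suc q \<in> B" using partition_onD1[OF assms(1)] assms(2) by blast
  then show ?thesis using block_of_eq[OF assms(1)] by simp
qed

lemma partition_on_letter_blocks:
  assumes "s \<in> std_pair_words k"
  shows "partition_on {1..2*k} (letter_block s ` set s)"
proof -
  have pw: "pair_word s" and len: "length s = 2 * k" using assms unfolding std_pair_words_def by auto
  have U: "\<Union>(letter_block s ` set s) = {1..2*k}"
  proof
    show "\<Union>(letter_block s ` set s) \<subseteq> {1..2*k}" using len unfolding letter_block_def occs_def by auto
  next
    show "{1..2*k} \<subseteq> \<Union>(letter_block s ` set s)"
    proof
      fix t assume t: "t \<in> {1..2*k}"
      define q where "q = t - 1"
      have q: "t = Suc q" "q < length s" using t len unfolding q_def by auto
      then have "t \<in> letter_block s (s ! q)" using Suc_in_letter_block_iff by simp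
      then show "t \<in> \<Union>(letter_block s ` set s)" using q by auto
    qed
  qed
  show ?thesis
  proof (rule partition_onI[OF U])
    fix p q assume p: "p \<in> letter_block s ` set s" and q: "q \<in> letter_block s ` set s" and ne: "p \<noteq> q"
    then obtain x y where "p = letter_block s x" "q = letter_block s y" by auto
    then show "disjnt p q" using ne unfolding disjnt_def by (auto simp: letter_block_def occs_def)
  next
    show "{} \<notin> letter_block s ` set s" using letter_block_eq[OF pw] by auto
  qed
qed

lemma partition_of_word_in_OV2:
  assumes "s \<in> std_pair_words k" "noncrossing_word s" "vmono_word s"
  shows "partition_of_word s \<in> OV2 k"
proof -
  have pw: "pair_word s" and len: "length s = 2 * k" and st: "set s = {1..k}" using assms unfolding std_pair_words_def by auto
  have c2: "\<forall>B\<in>letter_block s ` set s. card B = 2"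
  proof
    fix B assume "B \<in> letter_block s ` set s"
    then obtain x where x: "x \<in> set s" "B = letter_block s x" by auto
    then have "Suc (first_occ s x) \<noteq> Suc (last_occ s x)" using occs_pair_word[OF pw x(1)] by simp
    then show "card B = 2" using letter_block_eq[OF pw x(1)] x(2) by simp
  qed
  have ext: "block_label s \<in> extensional (letter_block s ` set s)" unfolding block_label_def by simp
  have bij: "bij_betw (block_label s) (letter_block s ` set s) {1..k}"
    unfolding bij_betw_def
  proof
    show "inj_on (block_label s) (letter_block s ` set s)" using block_label_letter_block[OF pw] by (intro inj_onI) auto
    show "block_label s ` letter_block s ` set s = {1..k}" using block_label_letter_block[OF pw] st by (force simp: image_image)
  qed
  have "vmono_chains s" using vmono_word_iff_vmono_chains assms(2,3) pw by blast
  then have vm: "vmono_labeling (letter_block s ` set s) (block_label s)" using vmono_labeling_iff_vmono_chains[OF pw] by simp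
  have nc: "noncrossing (letter_block s ` set s)" using noncrossing_iff_noncrossing_word[OF pw] assms(2) by simp
  show ?thesis unfolding OV2_def partition_of_word_def using partition_on_letter_blocks[OF assms(1)] c2 nc ext bij vm by simp
qed

lemma word_of_partition_of_word:
  assumes "s \<in> std_pair_words k"
  shows "word_of_partition k (partition_of_word s) = s"
proof -
  have pw: "pair_word s" and len: "length s = 2 * k" using assms unfolding std_pair_words_def by auto
  show ?thesis
  proof (rule nth_equalityI)
    show "length (word_of_partition k (partition_of_word s)) = length s" using len by (simp add: word_of_partition_def)
  next
    fix q assume q: "q < length (word_of_partition k (partition_of_word s))"
    then have q': "q < length s" using len by (simp add: word_of_partition_def)
    have "block_of (letter_block s ` set s) q = letter_block s (s ! q)"
      using block_of_eq[OF partition_on_letter_blocks[OF assms]] q' Suc_in_letter_block_iff by simp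
    then show "word_of_partition k (partition_of_word s) ! q = s ! q" using q q' block_label_letter_block[OF pw] len
      by (simp add: word_of_partition_def partition_of_word_def)
  qed
qed

lemma letter_block_word_of_partition:
  assumes part: "partition_on {1..2*k} \<pi>" and bij: "bij_betw f \<pi> {1..k}" and v: "v \<in> {1..k}"
  shows "letter_block (word_of_partition k (\<pi>, f)) v = inv_into \<pi> f v"
proof -
  let ?s = "word_of_partition k (\<pi>, f)" and ?B = "inv_into \<pi> f v"
  have B: "?B \<in> \<pi>" "f ?B = v"
    using bij v by (auto simp: bij_betw_def inv_into_into f_inv_into_f)
  have key: "?s ! q = v \<longleftrightarrow> Suc q \<in> ?B" if q: "q < 2 * k" for q
  proof
    have bo: "block_of \<pi> q \<in> \<pi> \<and> Suc q \<in> block_of \<pi> q" using block_of_mem[OF part] q by simp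
    assume "?s ! q = v"
    then have "f (block_of \<pi> q) = f ?B" using q B by (simp add: word_of_partition_def)
    then have "block_of \<pi> q = ?B" using bij bo B by (meson bij_betw_def inj_onD)
    then show "Suc q \<in> ?B" using bo by simp
  next
    assume "Suc q \<in> ?B"
    then have "block_of \<pi> q = ?B" using block_of_eq[OF part B(1)] by simp
    then show "?s ! q = v" using q B by (simp add: word_of_partition_def)
  qed
  show ?thesis
  proof
    show "letter_block ?s v \<subseteq> ?B"
    proof
      fix t assume "t \<in> letter_block ?s v"
      then obtain q where "t = Suc q" "q < 2 * k" "?s ! q = v"
        unfolding letter_block_def occs_def by (auto simp: word_of_partition_def)
      then show "t \<in> ?B" using key by simp
    qed
  next
    show "?B \<subseteq> letter_block ?s v"
    proof
      fix t assume t: "t \<in> ?B"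
      then have "t \<in> {1..2*k}" using partition_onD1[OF part] B(1) by blast
      then obtain q where q: "t = Suc q" "q < 2 * k" by (cases t) auto
      then show "t \<in> letter_block ?s v"
        using key[OF q(2)] t Suc_in_letter_block_iff by (simp add: word_of_partition_def)
    qed
  qed
qed

lemma word_of_partition_in_std_pair_words:
  assumes "(\<pi>, f) \<in> OV2 k"
  shows "word_of_partition k (\<pi>, f) \<in> std_pair_words k"
proof -
  have part: "partition_on {1..2*k} \<pi>" and c2: "\<forall>B\<in>\<pi>. card B = 2"
    and bij: "bij_betw f \<pi> {1..k}" using assms unfolding OV2_def by auto
  let ?s = "word_of_partition k (\<pi>, f)"
  note blocks = letter_block_word_of_partition[OF part bij]
  have len: "length ?s = 2 * k" by (simp add: word_of_partition_def)
  have "set ?s \<subseteq> {1..k}"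
  proof
    fix x assume "x \<in> set ?s"
    then obtain q where "q < 2 * k" "x = ?s ! q" using len by (metis in_set_conv_nth)
    then show "x \<in> {1..k}" using block_of_mem[OF part] bij
      by (auto simp: word_of_partition_def bij_betw_def)
  qed
  moreover have "{1..k} \<subseteq> set ?s"
  proof
    fix v assume v: "v \<in> {1..k}"
    have "inv_into \<pi> f v \<in> \<pi>" using bij v by (auto simp: bij_betw_def inv_into_into)
    then have "inv_into \<pi> f v \<noteq> {}" using partition_onD3[OF part] by auto
    then show "v \<in> set ?s" using blocks[OF v] unfolding letter_block_def occs_def by auto
  qed
  ultimately have st: "set ?s = {1..k}" by blast
  have "pair_word ?s" unfolding pair_word_def
  proof
    fix v assume "v \<in> set ?s"
    then have v: "v \<in> {1..k}" using st by simp
    have "count_list ?s v = card (letter_block ?s v)"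
      by (simp add: card_occs letter_block_def card_image)
    also have "\<dots> = 2"
      using blocks[OF v] c2 bij v by (auto simp: bij_betw_def inv_into_into)
    finally show "count_list ?s v = 2" .
  qed
  then show ?thesis using len st unfolding std_pair_words_def by simp
qed

lemma partition_of_word_of_partition:
  assumes "(\<pi>, f) \<in> OV2 k"
  shows "partition_of_word (word_of_partition k (\<pi>, f)) = (\<pi>, f)"
proof -
  have part: "partition_on {1..2*k} \<pi>" and c2: "\<forall>B\<in>\<pi>. card B = 2"
    and ext: "f \<in> extensional \<pi>" and bij: "bij_betw f \<pi> {1..k}"
    using assms unfolding OV2_def by auto
  let ?s = "word_of_partition k (\<pi>, f)"
  note blocks = letter_block_word_of_partition[OF part bij]
  have st: "set ?s = {1..k}"
    using word_of_partition_in_std_pair_words[OF assms] unfolding std_pair_words_def by simp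
  have P1: "letter_block ?s ` set ?s = \<pi>"
  proof
    show "letter_block ?s ` set ?s \<subseteq> \<pi>"
      using st blocks bij by (auto simp: bij_betw_def inv_into_into)
  next
    show "\<pi> \<subseteq> letter_block ?s ` set ?s"
    proof
      fix B assume B: "B \<in> \<pi>"
      have fB: "f B \<in> {1..k}" using bij B by (auto simp: bij_betw_def)
      have "inv_into \<pi> f (f B) = B" using bij B by (simp add: bij_betw_def)
      then show "B \<in> letter_block ?s ` set ?s" using blocks[OF fB] st fB by force
    qed
  qed
  have "block_label ?s = f"
  proof (rule extensionalityI[where A = \<pi>])
    show "block_label ?s \<in> extensional \<pi>" unfolding block_label_def P1 by simp
    show "f \<in> extensional \<pi>" by (rule ext)
  next
    fix B assume B: "B \<in> \<pi>"
    have "finite B" "B \<noteq> {}" using c2 B by (auto intro: card_ge_0_finite)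
    then have mB: "Min B \<in> B" by simp
    then have "Min B \<in> {1..2*k}" using partition_onD1[OF part] B by blast
    then have mq: "Min B = Suc (Min B - 1)" "Min B - 1 < 2 * k" by auto
    then have "block_of \<pi> (Min B - 1) = B" using block_of_eq[OF part B] mB by simp
    then show "block_label ?s B = f B"
      unfolding block_label_def P1 using B mq(2) by (simp add: word_of_partition_def)
  qed
  then show ?thesis using P1 unfolding partition_of_word_def by simp
qed

lemma card_std_pair_words_eq_card_OV2: "card {s \<in> std_pair_words k. noncrossing_word s \<and> vmono_word s} = card (OV2 k)"
proof (rule bij_betw_same_card[of partition_of_word])
  show "bij_betw partition_of_word {s \<in> std_pair_words k. noncrossing_word s \<and> vmono_word s} (OV2 k)"
  proof (rule bij_betw_byWitness[where f' = "word_of_partition k"])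
    show "\<forall>s\<in>{s \<in> std_pair_words k. noncrossing_word s \<and> vmono_word s}. word_of_partition k (partition_of_word s) = s" using word_of_partition_of_word by blast
    show "\<forall>pf\<in>OV2 k. partition_of_word (word_of_partition k pf) = pf"
      using partition_of_word_of_partition by auto
    show "partition_of_word ` {s \<in> std_pair_words k. noncrossing_word s \<and> vmono_word s} \<subseteq> OV2 k" using partition_of_word_in_OV2 by blast
    show "word_of_partition k ` OV2 k \<subseteq> {s \<in> std_pair_words k. noncrossing_word s \<and> vmono_word s}"
    proof
      fix s assume "s \<in> word_of_partition k ` OV2 k"
      then obtain pf where pf: "pf \<in> OV2 k" "s = word_of_partition k pf" by blast
      have S: "s \<in> std_pair_words k" and T: "partition_of_word s = pf"
        using word_of_partition_in_std_pair_words partition_of_word_of_partition pf by (cases pf; auto)+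
      have pw: "pair_word s" using S unfolding std_pair_words_def by simp
      have "noncrossing (letter_block s ` set s)" "vmono_labeling (letter_block s ` set s) (block_label s)"
        using pf(1) T unfolding OV2_def partition_of_word_def by auto
      then have "noncrossing_word s" "vmono_chains s" using noncrossing_iff_noncrossing_word[OF pw] vmono_labeling_iff_vmono_chains[OF pw] by auto
      then show "s \<in> {s \<in> std_pair_words k. noncrossing_word s \<and> vmono_word s}" using S vmono_word_iff_vmono_chains pw by blast
    qed
  qed
qed

section \<open>Standardization of words and counting\<close>

definition rank :: "nat set \<Rightarrow> nat \<Rightarrow> nat" where "rank T x = card {y \<in> T. y \<le> x}"

definition unrank :: "nat set \<Rightarrow> nat \<Rightarrow> nat" where "unrank T = inv_into T (rank T)"

definition standardize :: "nat list \<Rightarrow> nat list" where "standardize w = map (rank (set w)) w"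

lemma strict_mono_on_rank:
  assumes "finite T"
  shows "strict_mono_on T (rank T)"
proof (rule strict_mono_onI)
  fix r s assume rs: "r \<in> T" "s \<in> T" "r < s"
  have "s \<in> {y \<in> T. y \<le> s}" "s \<notin> {y \<in> T. y \<le> r}" using rs by auto
  moreover have "{y \<in> T. y \<le> r} \<subseteq> {y \<in> T. y \<le> s}" using rs by auto
  ultimately have "{y \<in> T. y \<le> r} \<subset> {y \<in> T. y \<le> s}" by blast
  then show "rank T r < rank T s" unfolding rank_def using assms by (intro psubset_card_mono) auto
qed

lemma inj_on_rank: "finite T \<Longrightarrow> inj_on (rank T) T"
  using strict_mono_on_rank strict_mono_on_imp_inj_on by blast

lemma rank_image:
  assumes "finite T"
  shows "rank T ` T = {1..card T}"
proof -
  have sub: "rank T ` T \<subseteq> {1..card T}"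
  proof
    fix r assume "r \<in> rank T ` T"
    then obtain x where x: "x \<in> T" "r = rank T x" by auto
    have "x \<in> {y \<in> T. y \<le> x}" using x by simp
    then have "1 \<le> r" using x assms unfolding rank_def by (metis (no_types, lifting) One_nat_def Suc_leI card_gt_0_iff empty_iff finite_subset mem_Collect_eq subsetI)
    moreover have "r \<le> card T" using x assms unfolding rank_def by (simp add: card_mono)
    ultimately show "r \<in> {1..card T}" by simp
  qed
  have "card (rank T ` T) = card {1..card T}" using card_image[OF inj_on_rank[OF assms]] by simp
  then show ?thesis using sub by (intro card_subset_eq) auto
qed

lemma unrank_rank: "finite T \<Longrightarrow> x \<in> T \<Longrightarrow> unrank T (rank T x) = x"
  unfolding unrank_def using inj_on_rank by (simp add: inv_into_f_f)

lemma rank_unrank: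
  assumes "finite T" "r \<in> {1..card T}"
  shows "unrank T r \<in> T" "rank T (unrank T r) = r"
proof -
  have r: "r \<in> rank T ` T" using rank_image[OF assms(1)] assms(2) by simp
  show "unrank T r \<in> T" unfolding unrank_def using r by (rule inv_into_into)
  show "rank T (unrank T r) = r" unfolding unrank_def using r by (rule f_inv_into_f)
qed

lemma unrank_image:
  assumes "finite T"
  shows "unrank T ` {1..card T} = T"
proof
  show "unrank T ` {1..card T} \<subseteq> T" using rank_unrank[OF assms] by auto
  show "T \<subseteq> unrank T ` {1..card T}"
  proof
    fix x assume x: "x \<in> T"
    then have "rank T x \<in> {1..card T}" using rank_image[OF assms] by auto
    then show "x \<in> unrank T ` {1..card T}" using unrank_rank[OF assms x] by force
  qed
qed

lemma strict_mono_on_unrank: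
  assumes "finite T"
  shows "strict_mono_on {1..card T} (unrank T)"
proof (rule strict_mono_onI)
  fix r s assume rs: "r \<in> {1..card T}" "s \<in> {1..card T}" "r < s"
  show "unrank T r < unrank T s"
  proof (rule ccontr)
    assume "\<not> unrank T r < unrank T s"
    then have "unrank T s \<le> unrank T r" by simp
    then have "rank T (unrank T s) \<le> rank T (unrank T r)"
      using strict_mono_on_less_eq[OF strict_mono_on_rank[OF assms]] rank_unrank[OF assms] rs by blast
    then show False using rank_unrank[OF assms] rs by simp
  qed
qed

lemma standardize_props:
  shows "length (standardize w) = length w" "set (standardize w) = {1..card (set w)}" "map (unrank (set w)) (standardize w) = w"
proof -
  show "length (standardize w) = length w" by (simp add: standardize_def)
  show "set (standardize w) = {1..card (set w)}" using rank_image[of "set w"] by (simp add: standardize_def)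
  have "map (unrank (set w)) (standardize w) = map (\<lambda>x. unrank (set w) (rank (set w) x)) w" by (simp add: standardize_def)
  also have "\<dots> = map id w" using unrank_rank[of "set w"] by (intro map_cong) auto
  finally show "map (unrank (set w)) (standardize w) = w" by simp
qed

lemma set_standardize_subset: "set (standardize w) \<subseteq> {1..length w}"
  using standardize_props(2)[of w] card_length[of w] by auto

lemma pair_word_map_inj:
  assumes "inj_on f (set s)"
  shows "pair_word (map f s) \<longleftrightarrow> pair_word s"
  unfolding pair_word_def using count_list_inj_map[OF assms] by auto

lemma length_pair_word:
  assumes "pair_word w"
  shows "length w = 2 * card (set w)"
proof -
  have "length w = sum (count_list w) (set w)" using sum_count_set[of w "set w"] by simp
  also have "\<dots> = sum (\<lambda>_. 2) (set w)" using assms unfolding pair_word_def by simp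
  finally show ?thesis by simp
qed

lemma length_non_pair_word:
  assumes "\<not> pair_word w" "\<forall>x\<in>set w. count_list w x \<noteq> 1"
  shows "2 * card (set w) < length w"
proof -
  have ge: "count_list w x \<ge> 2" if "x \<in> set w" for x
    using assms(2) that count_list_0_iff[of w x] by fastforce
  obtain y where y: "y \<in> set w" "count_list w y \<noteq> 2" using assms(1) unfolding pair_word_def by blast
  have "sum (\<lambda>_. 2) (set w) < sum (count_list w) (set w)"
    using ge y by (intro sum_strict_mono_ex1) (auto intro!: bexI[of _ y] le_neq_implies_less)
  also have "\<dots> = length w" using sum_count_set[of w "set w"] by simp
  finally show ?thesis by simp
qed

definition words :: "nat \<Rightarrow> nat \<Rightarrow> nat list set" where
  "words n N = {w. set w \<subseteq> {1..N} \<and> length w = n}"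

lemma finite_words: "finite (words n N)" unfolding words_def by (rule finite_lists_length_eq) simp

lemma finite_std_pair_words: "finite (std_pair_words k)"
proof -
  have "std_pair_words k \<subseteq> {s. set s \<subseteq> {1..k} \<and> length s = 2 * k}" unfolding std_pair_words_def by auto
  then show ?thesis using finite_lists_length_eq[of "{1..k}" "2 * k"] finite_subset by blast
qed

lemma power_sum_eq_sum_words:
  fixes a :: "nat \<Rightarrow> 'b::ring_1"
  assumes "finite A"
  shows "(\<Sum>i\<in>A. a i) ^ n = (\<Sum>w\<in>{w. set w \<subseteq> A \<and> length w = n}. prod_list (map a w))"
proof (induction n)
  case 0
  have "{w. set w \<subseteq> A \<and> length w = 0} = {[]}" by auto
  then show ?case by simp
next
  case (Suc n)
  let ?L = "\<lambda>n. {w. set w \<subseteq> A \<and> length w = n}"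
  have bij: "bij_betw (\<lambda>(i, w). i # w) (A \<times> ?L n) (?L (Suc n))"
  proof (rule bij_betw_byWitness[where f' = "\<lambda>w. (hd w, tl w)"])
    show "\<forall>x\<in>A \<times> ?L n. (\<lambda>w. (hd w, tl w)) ((\<lambda>(i, w). i # w) x) = x" by auto
    show "\<forall>y\<in>?L (Suc n). (\<lambda>(i, w). i # w) (hd y, tl y) = y" by (auto simp: length_Suc_conv)
    show "(\<lambda>(i, w). i # w) ` (A \<times> ?L n) \<subseteq> ?L (Suc n)" by auto
    show "(\<lambda>w. (hd w, tl w)) ` ?L (Suc n) \<subseteq> A \<times> ?L n" by (auto simp: length_Suc_conv)
  qed
  have "(\<Sum>i\<in>A. a i) ^ Suc n = (\<Sum>i\<in>A. a i) * (\<Sum>w\<in>?L n. prod_list (map a w))"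
    using Suc by simp
  also have "\<dots> = (\<Sum>i\<in>A. \<Sum>w\<in>?L n. a i * prod_list (map a w))"
    by (simp add: sum_distrib_left sum_distrib_right sum.swap[of _ A])
  also have "\<dots> = (\<Sum>(i, w)\<in>A \<times> ?L n. prod_list (map a (i # w)))"
    by (simp add: sum.cartesian_product)
  also have "\<dots> = (\<Sum>w\<in>?L (Suc n). prod_list (map a w))"
    using sum.reindex_bij_betw[OF bij, of "\<lambda>w. prod_list (map a w)"] by (simp add: split_beta)
  finally show ?case .
qed

lemma card_subsets_card_le:
  assumes "1 \<le> N"
  shows "card {T. T \<subseteq> {1..N} \<and> card T \<le> d} \<le> Suc d * N ^ d"
proof -
  have "{T. T \<subseteq> {1..N} \<and> card T \<le> d} = (\<Union>j\<in>{..d}. {T. T \<subseteq> {1..N} \<and> card T = j})" by auto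
  then have "card {T. T \<subseteq> {1..N} \<and> card T \<le> d} \<le> (\<Sum>j\<in>{..d}. card {T. T \<subseteq> {1..N} \<and> card T = j})"
    using card_UN_le[OF finite_atMost[of d], of "\<lambda>j. {T. T \<subseteq> {1..N} \<and> card T = j}"] by simp
  also have "\<dots> = (\<Sum>j\<in>{..d}. N choose j)" using n_subsets[of "{1..N}"] by simp
  also have "\<dots> \<le> (\<Sum>j\<in>{..d}. N ^ d)"
  proof (rule sum_mono)
    fix j assume "j \<in> {..d}"
    then have "N ^ j \<le> N ^ d" using assms by (intro power_increasing) auto
    moreover have "N choose j \<le> N ^ j"
      by (cases "j \<le> N") (simp_all add: binomial_le_pow binomial_eq_0)
    ultimately show "N choose j \<le> N ^ d" by linarith
  qed
  finally show ?thesis by simp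
qed

lemma card_words_few_letters:
  assumes "1 \<le> N"
  shows "card {w \<in> words n N. card (set w) \<le> d} \<le> Suc d * N ^ d * d ^ n"
proof -
  let ?S = "{T. T \<subseteq> {1..N} \<and> card T \<le> d}"
  have fS: "finite ?S" by (rule finite_subset[of _ "Pow {1..N}"]) auto
  have "{w \<in> words n N. card (set w) \<le> d} \<subseteq> (\<Union>T\<in>?S. {w. set w \<subseteq> T \<and> length w = n})"
    unfolding words_def by auto
  then have "card {w \<in> words n N. card (set w) \<le> d} \<le> card (\<Union>T\<in>?S. {w. set w \<subseteq> T \<and> length w = n})"
    by (intro card_mono) (auto intro!: finite_lists_length_eq fS finite_subset[of _ "{1..N}"])
  also have "\<dots> \<le> (\<Sum>T\<in>?S. card {w. set w \<subseteq> T \<and> length w = n})" by (rule card_UN_le[OF fS])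
  also have "\<dots> = (\<Sum>T\<in>?S. card T ^ n)"
    by (intro sum.cong refl card_lists_length_eq) (auto intro: finite_subset[of _ "{1..N}"] simp: finite_subset)
  also have "\<dots> \<le> (\<Sum>T\<in>?S. d ^ n)" by (intro sum_mono power_mono) auto
  also have "\<dots> = card ?S * d ^ n" by simp
  also have "\<dots> \<le> Suc d * N ^ d * d ^ n" using card_subsets_card_le[OF assms, of d] by (intro mult_right_mono) auto
  finally show ?thesis .
qed

lemma words_pair_word_odd: "odd n \<Longrightarrow> words n N \<inter> {w. pair_word w} = {}"
  unfolding words_def using length_pair_word by fastforce

lemma tendsto_divide_sqrt_0: "(\<lambda>N. B / sqrt (real N)) \<longlonglongrightarrow> 0"
proof -
  have "filterlim (\<lambda>N. sqrt (real N)) at_top sequentially"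
    by (rule filterlim_compose[OF sqrt_at_top filterlim_real_sequentially])
  then show ?thesis
    by (intro tendsto_divide_0[OF tendsto_const] filterlim_at_top_imp_at_infinity)
qed

lemma tendsto_binomial_div_power: "(\<lambda>N. real (N choose k) / real N ^ k) \<longlonglongrightarrow> 1 / fact k"
proof -
  have e: "real (N choose k) / real N ^ k = (\<Prod>i\<in>{0..<k}. 1 - real i / real N) / fact k" if N: "N \<ge> 1" for N
  proof -
    have "real (N choose k) = (\<Prod>i\<in>{0..<k}. real N - real i) / fact k"
      using gbinomial_mult_fact'[of "real N" k] by (simp add: binomial_gbinomial field_simps)
    moreover have "(\<Prod>i\<in>{0..<k}. real N - real i) / real N ^ k = (\<Prod>i\<in>{0..<k}. 1 - real i / real N)"
    proof -
      have "(\<Prod>i\<in>{0..<k}. 1 - real i / real N) = (\<Prod>i\<in>{0..<k}. (real N - real i) / real N)"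
        using N by (intro prod.cong refl) (simp add: field_simps)
      also have "\<dots> = (\<Prod>i\<in>{0..<k}. real N - real i) / real N ^ k" by (simp add: prod_dividef)
      finally show ?thesis by simp
    qed
    ultimately show ?thesis by (metis divide_divide_eq_left mult.commute)
  qed
  have "(\<lambda>N. (\<Prod>i\<in>{0..<k}. 1 - real i / real N) / fact k) \<longlonglongrightarrow> (\<Prod>i\<in>{0..<k}. 1 - 0) / fact k"
    by (intro tendsto_intros) auto
  then have "(\<lambda>N. (\<Prod>i\<in>{0..<k}. 1 - real i / real N) / fact k) \<longlonglongrightarrow> 1 / fact k" by simp
  then show ?thesis
    by (rule Lim_transform_eventually) (use e in \<open>auto simp: eventually_sequentially intro!: exI[of _ 1]\<close>)
qed

lemma power_inverse_sqrt_mult_le: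
  assumes N: "1 \<le> N" and B: "0 \<le> B" and d: "2 * d < n"
  shows "(1 / sqrt (real N)) ^ n * (B * real N ^ d) \<le> B / sqrt (real N)"
proof -
  have sN: "1 \<le> sqrt (real N)" using N by simp
  have "real N ^ d = sqrt (real N) ^ (2 * d)" by (simp add: power_mult)
  moreover have "sqrt (real N) ^ n = sqrt (real N) ^ (n - 2 * d) * sqrt (real N) ^ (2 * d)"
    using d by (simp flip: power_add)
  ultimately have "(1 / sqrt (real N)) ^ n * (B * real N ^ d) = B / sqrt (real N) ^ (n - 2 * d)"
    using sN by (simp add: field_simps power_one_over)
  also have "\<dots> \<le> B / sqrt (real N)"
  proof (rule divide_left_mono[OF _ B])
    show "sqrt (real N) \<le> sqrt (real N) ^ (n - 2 * d)"
      using power_increasing[OF _ sN, of 1 "n - 2 * d"] d by simp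
    show "0 < sqrt (real N) ^ (n - 2 * d) * sqrt (real N)" using sN by simp
  qed
  finally show ?thesis .
qed

lemma bij_betw_unrank_std_pair_words:
  "bij_betw (\<lambda>(T, s). map (unrank T) s) ({T. T \<subseteq> {1..N} \<and> card T = k} \<times> std_pair_words k)
     (words (2 * k) N \<inter> {w. pair_word w})"
proof (rule bij_betw_byWitness[where f' = "\<lambda>w. (set w, standardize w)"])
  let ?Ts = "{T. T \<subseteq> {1..N} \<and> card T = k}"
  let ?D = "?Ts \<times> std_pair_words k"
  let ?Pr = "words (2 * k) N \<inter> {w. pair_word w}"
  let ?F = "\<lambda>(T, s). map (unrank T) s"
  have finT: "finite T" if "T \<in> ?Ts" for T using that finite_subset by blast
  show "\<forall>x\<in>?D. (\<lambda>w. (set w, standardize w)) (?F x) = x"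
  proof
    fix x assume x: "x \<in> ?D"
    then obtain T s where ts: "x = (T, s)" "T \<in> ?Ts" "s \<in> std_pair_words k" by auto
    have ss: "set s = {1..card T}" using ts unfolding std_pair_words_def by simp
    have e1: "set (map (unrank T) s) = T" using unrank_image[OF finT[OF ts(2)]] ss by simp
    have "standardize (map (unrank T) s) = map (\<lambda>r. rank T (unrank T r)) s" unfolding standardize_def e1 by simp
    also have "\<dots> = map id s" using rank_unrank(2)[OF finT[OF ts(2)]] ss by (intro map_cong) auto
    finally show "(\<lambda>w. (set w, standardize w)) (?F x) = x" using ts e1 by simp
  qed
  show "\<forall>y\<in>?Pr. ?F (set y, standardize y) = y" using standardize_props(3) by auto
  show "?F ` ?D \<subseteq> ?Pr"
  proof
    fix w assume "w \<in> ?F ` ?D"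
    then obtain T s where ts: "w = map (unrank T) s" "T \<in> ?Ts" "s \<in> std_pair_words k" by auto
    have ss: "set s = {1..card T}" "length s = 2 * k" "pair_word s" using ts unfolding std_pair_words_def by auto
    have e1: "set w = T" using unrank_image[OF finT[OF ts(2)]] ss ts(1) by simp
    have "inj_on (unrank T) (set s)" using strict_mono_on_imp_inj_on[OF strict_mono_on_unrank[OF finT[OF ts(2)]]] ss by simp
    then have "pair_word w" using pair_word_map_inj ss ts(1) by simp
    then show "w \<in> ?Pr" using e1 ts ss unfolding words_def by simp
  qed
  show "(\<lambda>w. (set w, standardize w)) ` ?Pr \<subseteq> ?D"
  proof
    fix x assume "x \<in> (\<lambda>w. (set w, standardize w)) ` ?Pr"
    then obtain w where w: "x = (set w, standardize w)" "w \<in> ?Pr" by auto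
    have wl: "length w = 2 * k" "set w \<subseteq> {1..N}" "pair_word w" using w unfolding words_def by auto
    have ck: "card (set w) = k" using length_pair_word[OF wl(3)] wl(1) by simp
    have "inj_on (rank (set w)) (set w)" using inj_on_rank by simp
    then have "pair_word (standardize w)" using pair_word_map_inj wl(3) unfolding standardize_def by simp
    then have "standardize w \<in> std_pair_words k" using standardize_props(1,2)[of w] wl ck unfolding std_pair_words_def by simp
    then show "x \<in> ?D" using w wl ck by simp
  qed
qed

section \<open>Polynomials in one element of the family\<close>

locale vmono_clt =
  fixes smul :: "complex \<Rightarrow> 'a::{real_normed_algebra_1,banach} \<Rightarrow> 'a"
    and star :: "'a \<Rightarrow> 'a"
    and \<phi> :: "'a \<Rightarrow> complex"
    and a u :: "nat \<Rightarrow> 'a"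
  assumes cstar_prob: "cstar_prob_space smul star \<phi>"
    and vmono: "vmono_indep \<phi> {1..} (\<lambda>i. gen_alg smul {a i, u i}) u"
    and identically_distributed: "\<forall>i\<ge>1. \<forall>j\<ge>1. \<forall>k::nat. \<phi> (a i ^ k) = \<phi> (a j ^ k)"
    and mean_variance: "\<forall>i\<ge>1. \<phi> (a i) = 0 \<and> \<phi> (a i ^ 2) = 1"
begin

lemma cstar: "cstar_algebra smul star"
  using cstar_prob unfolding cstar_prob_space_def by (elim conjE)

lemma state: "is_state smul star \<phi>"
  using cstar_prob unfolding cstar_prob_space_def by (elim conjE)

lemma smul_of_real: "smul (complex_of_real r) x = scaleR r x"
  using cstar unfolding cstar_algebra_def by (elim conjE allE) 

lemma smul_add: "smul c (x + y) = smul c x + smul c y"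
  using cstar unfolding cstar_algebra_def by (elim conjE allE)

lemma smul_add_left: "smul (c + d) x = smul c x + smul d x"
  using cstar unfolding cstar_algebra_def by (elim conjE allE)

lemma smul_smul: "smul c (smul d x) = smul (c * d) x"
  using cstar unfolding cstar_algebra_def by (elim conjE allE)

lemma smul_mult_left: "smul c x * y = smul c (x * y)"
proof -
  have "\<forall>c x y. smul c (x * y) = smul c x * y \<and> smul c (x * y) = x * smul c y"
    using cstar unfolding cstar_algebra_def by (elim conjE)
  then show ?thesis by metis
qed

lemma smul_mult_right: "x * smul c y = smul c (x * y)"
proof -
  have "\<forall>c x y. smul c (x * y) = smul c x * y \<and> smul c (x * y) = x * smul c y"
    using cstar unfolding cstar_algebra_def by (elim conjE)
  then show ?thesis by metis
qed

lemma smul_0_left[simp]: "smul 0 x = 0"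
  using smul_of_real[of 0 x] by simp

lemma smul_1[simp]: "smul 1 x = x"
  using smul_of_real[of 1 x] by simp

lemma smul_0_right[simp]: "smul c 0 = 0"
  using smul_add[of c 0 0] by simp

lemma smul_minus_one: "smul (-1) x = - x"
  using smul_of_real[of "-1" x] by simp

lemma smul_sum: "smul c (sum f A) = (\<Sum>x\<in>A. smul c (f x))"
  by (induction A rule: infinite_finite_induct) (auto simp: smul_add)

lemma phi_add: "\<phi> (x + y) = \<phi> x + \<phi> y"
  using state unfolding is_state_def by (elim conjE allE)

lemma phi_smul: "\<phi> (smul c x) = c * \<phi> x"
  using state unfolding is_state_def by (elim conjE allE)

lemma phi_1[simp]: "\<phi> 1 = 1"
  using state unfolding is_state_def by (elim conjE allE)

lemma phi_0[simp]: "\<phi> 0 = 0"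
  using phi_add[of 0 0] by simp

lemma phi_sum: "\<phi> (sum f A) = (\<Sum>x\<in>A. \<phi> (f x))"
  by (induction A rule: infinite_finite_induct) (auto simp: phi_add)

lemma phi_scaleR: "\<phi> (scaleR r x) = complex_of_real r * \<phi> x"
  using phi_smul[of "complex_of_real r" x] smul_of_real by simp

lemma a_in_gen_alg: "a i \<in> gen_alg smul {a i, u i}" by (auto intro: gen_base)

lemma u_in_gen_alg: "u i \<in> gen_alg smul {a i, u i}" by (auto intro: gen_base)

lemma unit_mult:
  assumes "i \<ge> 1" "x \<in> gen_alg smul {a i, u i}"
  shows "u i * x = x" "x * u i = x"
  using vmono assms unfolding vmono_indep_def by auto

lemma phi_unit: "i \<ge> 1 \<Longrightarrow> \<phi> (u i) = 1"
  using vmono unfolding vmono_indep_def by auto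

definition upow :: "nat \<Rightarrow> nat \<Rightarrow> 'a" where
  "upow i k = (if k = 0 then u i else a i ^ k)"

lemma unit_mult_generators: "i \<ge> 1 \<Longrightarrow> u i * a i = a i" "i \<ge> 1 \<Longrightarrow> a i * u i = a i" "i \<ge> 1 \<Longrightarrow> u i * u i = u i"
  using unit_mult a_in_gen_alg u_in_gen_alg by auto

lemma pw_Suc: "i \<ge> 1 \<Longrightarrow> upow i (Suc k) = a i * upow i k"
  by (auto simp: upow_def unit_mult_generators)

lemma u_pw: "i \<ge> 1 \<Longrightarrow> u i * upow i k = upow i k"
proof (induction k)
  case 0 then show ?case by (simp add: upow_def unit_mult_generators)
next
  case (Suc k)
  then show ?case using pw_Suc[of i] 
    by (metis mult.assoc unit_mult_generators(1))
qed

text \<open>The constant term of p is taken as a multiple of the inner unit u i, not of 1.\<close>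

definition peval :: "nat \<Rightarrow> complex poly \<Rightarrow> 'a" where
  "peval i p = (\<Sum>k\<le>degree p. smul (coeff p k) (upow i k))"

lemma peval_bound: "degree p \<le> D \<Longrightarrow> peval i p = (\<Sum>k\<le>D. smul (coeff p k) (upow i k))"
  unfolding peval_def
  by (rule sum.mono_neutral_left) (auto simp: coeff_eq_0)

lemma peval_0[simp]: "peval i 0 = 0" by (simp add: peval_def)

lemma peval_add: "peval i (p + q) = peval i p + peval i q"
proof -
  let ?D = "max (degree p) (degree q)"
  have "peval i (p + q) = (\<Sum>k\<le>?D. smul (coeff (p+q) k) (upow i k))"
    by (rule peval_bound) (simp add: degree_add_le)
  also have "\<dots> = (\<Sum>k\<le>?D. smul (coeff p k) (upow i k)) + (\<Sum>k\<le>?D. smul (coeff q k) (upow i k))"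
    by (simp add: smul_add_left sum.distrib)
  also have "\<dots> = peval i p + peval i q"
    by (simp add: peval_bound[symmetric])
  finally show ?thesis .
qed

lemma peval_smult: "peval i (smult c p) = smul c (peval i p)"
proof -
  have "peval i (smult c p) = (\<Sum>k\<le>degree p. smul (coeff (smult c p) k) (upow i k))"
    by (rule peval_bound) simp
  also have "\<dots> = smul c (peval i p)"
    by (simp add: peval_def smul_sum smul_smul)
  finally show ?thesis .
qed

lemma peval_diff: "peval i (p - q) = peval i p - peval i q"
proof -
  have "p - q = p + smult (-1) q" by simp
  then have "peval i (p - q) = peval i p + smul (-1) (peval i q)" by (simp only: peval_add peval_smult)
  then show ?thesis by (simp add: smul_minus_one)
qed

lemma peval_pCons: "i \<ge> 1 \<Longrightarrow> peval i (pCons c p) = smul c (u i) + a i * peval i p"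
proof -
  assume i: "i \<ge> 1"
  have "peval i (pCons c p) = (\<Sum>k\<le>Suc (degree p). smul (coeff (pCons c p) k) (upow i k))"
    by (rule peval_bound) (simp add: degree_pCons_le)
  also have "\<dots> = smul c (u i) + (\<Sum>k\<le>degree p. smul (coeff p k) (upow i (Suc k)))"
    by (simp only: sum.atMost_Suc_shift coeff_pCons_0 coeff_pCons_Suc) (simp add: upow_def)
  also have "\<dots> = smul c (u i) + a i * peval i p"
    by (simp add: peval_def sum_distrib_left pw_Suc[OF i] smul_mult_right)
  finally show ?thesis .
qed

lemma unit_mult_peval: "i \<ge> 1 \<Longrightarrow> u i * peval i p = peval i p"
  by (simp add: peval_def sum_distrib_left smul_mult_right u_pw)

lemma peval_mult: "i \<ge> 1 \<Longrightarrow> peval i (p * q) = peval i p * peval i q"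
proof (induction p rule: pCons_induct)
  case 0 then show ?case by simp
next
  case (pCons c p)
  have "peval i (pCons c p * q) = peval i (smult c q + pCons 0 (p * q))"
    by simp
  also have "\<dots> = smul c (peval i q) + a i * (peval i p * peval i q)"
    using pCons by (simp add: peval_add peval_smult peval_pCons)
  also have "\<dots> = peval i (pCons c p) * peval i q"
    using pCons by (simp add: peval_pCons distrib_right smul_mult_left unit_mult_peval mult.assoc)
  finally show ?case .
qed

lemma peval_const: "peval i [:c:] = smul c (u i)"
  by (simp add: peval_def upow_def)

lemma peval_1: "peval i 1 = u i"
  by (simp add: peval_def upow_def one_pCons)

definition poly_X :: "complex poly" where "poly_X = [:0,1:]"

lemma peval_X: "i \<ge> 1 \<Longrightarrow> peval i poly_X = a i"
  by (simp add: poly_X_def peval_pCons peval_1 unit_mult_generators)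

lemma peval_X_squared: "i \<ge> 1 \<Longrightarrow> peval i (poly_X * poly_X) = a i ^ 2"
  by (simp add: peval_mult peval_X power2_eq_square)

lemma gen_alg_sum: "finite A \<Longrightarrow> A \<noteq> {} \<Longrightarrow> (\<And>x. x \<in> A \<Longrightarrow> f x \<in> gen_alg smul S) \<Longrightarrow> sum f A \<in> gen_alg smul S"
proof (induction A rule: finite_ne_induct)
  case (singleton x) then show ?case by simp
next
  case (insert x F) then show ?case by (simp add: gen_add)
qed

lemma pw_mem: "upow i k \<in> gen_alg smul {a i, u i}"
proof (induction k)
  case 0 then show ?case by (simp add: upow_def gen_base)
next
  case (Suc k)
  have "upow i (Suc k) = a i ^ (Suc k)" by (simp add: upow_def)
  moreover have "a i ^ Suc k \<in> gen_alg smul {a i, u i}"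
  proof (induction k)
    case 0 then show ?case by (simp add: gen_base)
  next
    case (Suc k) then show ?case by (metis gen_mult a_in_gen_alg power_Suc)
  qed
  ultimately show ?case by simp
qed

lemma peval_in_gen_alg: "peval i p \<in> gen_alg smul {a i, u i}"
  unfolding peval_def by (rule gen_alg_sum) (auto intro: gen_smul pw_mem)

definition moment :: "nat \<Rightarrow> complex" where "moment k = (if k = 0 then 1 else \<phi> (a 1 ^ k))"

text \<open>poly_mean p is the common value of the state on p(a i), by identical distribution.\<close>

definition poly_mean :: "complex poly \<Rightarrow> complex" where
  "poly_mean p = (\<Sum>k\<le>degree p. coeff p k * moment k)"

lemma phi_pw: "i \<ge> 1 \<Longrightarrow> \<phi> (upow i k) = moment k"
proof -
  assume i: "i \<ge> 1"
  have "\<phi> (a i ^ k) = \<phi> (a 1 ^ k)" using identically_distributed i by blast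
  then show ?thesis using phi_unit[OF i] by (simp add: upow_def moment_def)
qed

lemma phi_peval: "i \<ge> 1 \<Longrightarrow> \<phi> (peval i p) = poly_mean p"
  by (simp add: peval_def phi_sum phi_smul phi_pw poly_mean_def)

lemma poly_mean_centered: "poly_mean (p - [:poly_mean p:]) = 0"
proof -
  have "\<phi> (peval 1 (p - [:poly_mean p:])) = \<phi> (peval 1 p - smul (poly_mean p) (u 1))"
    by (simp add: peval_diff peval_const)
  also have "peval 1 p - smul (poly_mean p) (u 1) = peval 1 p + smul (- poly_mean p) (u 1)"
    by (simp add: smul_minus_one[symmetric] smul_smul)
  also have "\<phi> \<dots> = 0" by (simp add: phi_add phi_smul phi_peval phi_unit)
  finally show ?thesis by (simp add: phi_peval)
qed

lemma poly_mean_X: "poly_mean poly_X = 0"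
proof -
  have "\<phi> (a 1) = 0" using mean_variance by simp
  then show ?thesis using phi_peval[of 1 poly_X] peval_X[of 1] by simp
qed

lemma poly_mean_X_squared_minus_1: "poly_mean (poly_X * poly_X - 1) = 0"
proof -
  have "\<phi> (a 1 ^ 2) = 1" using mean_variance by simp
  moreover have "peval 1 (poly_X * poly_X - 1) = a 1 ^ 2 + smul (-1) (u 1)"
    by (simp add: peval_diff peval_X_squared peval_1 smul_minus_one)
  ultimately show ?thesis using phi_peval[of 1 "poly_X*poly_X - 1"] phi_unit[of 1] by (simp add: phi_add phi_smul)
qed

definition letter_eval :: "nat \<times> complex poly \<Rightarrow> 'a" where "letter_eval x = peval (fst x) (snd x)"

definition word_prod :: "complex poly word \<Rightarrow> 'a" where "word_prod W = prod_list (map letter_eval W)"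

lemma word_prod_Nil[simp]: "word_prod [] = 1" by (simp add: word_prod_def)

lemma word_prod_Cons: "word_prod (x # W) = letter_eval x * word_prod W" by (simp add: word_prod_def)

lemma word_prod_append: "word_prod (V @ W) = word_prod V * word_prod W" by (simp add: word_prod_def)

lemma word_prod_merge_adj: "set (map fst W) \<subseteq> {1..} \<Longrightarrow> word_prod (merge_adj W) = word_prod W"
proof (induction W rule: merge_adj.induct)
  case (1 x y xs)
  show ?case
  proof (cases "fst x = fst y")
    case True
    have "word_prod (merge_adj (x # y # xs)) = word_prod ((fst x, snd x * snd y) # xs)" using 1 True by auto
    also have "\<dots> = word_prod (x # y # xs)" using 1(3) True
      by (simp add: word_prod_Cons letter_eval_def peval_mult mult.assoc)
    finally show ?thesis .
  next
    case False then show ?thesis using 1 by (simp add: word_prod_Cons)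
  qed
qed auto

lemma word_prod_list_update: "j < length W \<Longrightarrow> word_prod (W[j := x]) = word_prod (take j W) * letter_eval x * word_prod (drop (Suc j) W)"
  by (simp add: upd_conv_take_nth_drop word_prod_append word_prod_Cons mult.assoc)

lemma word_prod_nth: "j < length W \<Longrightarrow> word_prod W = word_prod (take j W) * letter_eval (W ! j) * word_prod (drop (Suc j) W)"
  using word_prod_list_update[of j W "W ! j"] by simp

lemma phi_word_prod_unit_deletion:
  assumes "successively (\<noteq>) (map fst W)" "set (map fst W) \<subseteq> {1..}" "j < length W"
    "\<forall>k<j. poly_mean (snd (W ! k)) = 0"
  shows "\<phi> (word_prod (W[j := (fst (W ! j), 1)])) =
    (if vseq (take (Suc j) (map fst W)) then \<phi> (word_prod (take j W @ drop (Suc j) W)) else 0)"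
proof -
  let ?is = "map fst W" and ?as = "map letter_eval W"
  let ?A = "\<lambda>i. gen_alg smul {a i, u i}"
  have H: "\<forall>is as. is \<noteq> [] \<and> set is \<subseteq> {1..} \<and> length as = length is \<and>
        (\<forall>k. Suc k < length is \<longrightarrow> is ! k \<noteq> is ! Suc k) \<and>
        (\<forall>k < length is. as ! k \<in> ?A (is ! k)) \<longrightarrow>
      ((\<forall>k < length as. \<phi> (as ! k) = 0) \<longrightarrow> \<phi> (prod_list as) = 0) \<and>
      (let r = (GREATEST r. r \<le> length is \<and> vseq (take r is)) in
        \<forall>j < length is. (\<forall>k < j. \<phi> (as ! k) = 0) \<longrightarrow>
          \<phi> (prod_list (as[j := u (is ! j)])) =
            (if j < r then \<phi> (prod_list (take j as @ drop (Suc j) as)) else 0))"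
    using vmono unfolding vmono_indep_def by blast
  have c1: "?is \<noteq> []" using assms(3) by auto
  have c2: "\<forall>k. Suc k < length ?is \<longrightarrow> ?is ! k \<noteq> ?is ! Suc k"
    using assms(1) by (simp add: successively_conv_nth)
  have c3: "\<forall>k < length ?is. ?as ! k \<in> ?A (?is ! k)" by (simp add: letter_eval_def peval_in_gen_alg)
  have c4: "\<forall>k < j. \<phi> (?as ! k) = 0"
  proof (intro allI impI)
    fix k assume "k < j"
    then have "k < length W" using assms(3) by simp
    then have "fst (W ! k) \<ge> 1" using assms(2) by (auto dest!: nth_mem)
    then show "\<phi> (?as ! k) = 0" using assms(4) \<open>k < j\<close> \<open>k < length W\<close> by (simp add: letter_eval_def phi_peval)
  qed
  have R: "\<phi> (prod_list (?as[j := u (?is ! j)])) =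
            (if j < (GREATEST r. r \<le> length ?is \<and> vseq (take r ?is)) then \<phi> (prod_list (take j ?as @ drop (Suc j) ?as)) else 0)"
    using H[rule_format, OF conjI[OF c1 conjI[OF assms(2) conjI[OF _ conjI[OF c2 c3]]]]] c4 assms(3)
    unfolding Let_def by simp
  have e1: "?as[j := u (?is ! j)] = map letter_eval (W[j := (fst (W ! j), 1)])"
    using assms(3) by (simp add: map_update letter_eval_def peval_1)
  have e2: "take j ?as @ drop (Suc j) ?as = map letter_eval (take j W @ drop (Suc j) W)"
    by (simp add: take_map drop_map)
  have G: "j < (GREATEST r. r \<le> length ?is \<and> vseq (take r ?is)) \<longleftrightarrow> vseq (take (Suc j) ?is)"
    using less_Greatest_vseq_iff[OF c1, of j] assms(3) by simp
  from R have "\<phi> (prod_list (map letter_eval (W[j := (fst (W ! j), 1)]))) = (if vseq (take (Suc j) ?is)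
     then \<phi> (prod_list (map letter_eval (take j W @ drop (Suc j) W))) else 0)"
    unfolding e1 e2 G .
  then show ?thesis unfolding word_prod_def .
qed

lemma phi_word_prod_centered:
  assumes "successively (\<noteq>) (map fst W)" "set (map fst W) \<subseteq> {1..}" "W \<noteq> []"
    "\<forall>k<length W. poly_mean (snd (W ! k)) = 0"
  shows "\<phi> (word_prod W) = 0"
proof -
  let ?is = "map fst W" and ?as = "map letter_eval W"
  let ?A = "\<lambda>i. gen_alg smul {a i, u i}"
  have H: "\<forall>is as. is \<noteq> [] \<and> set is \<subseteq> {1..} \<and> length as = length is \<and>
        (\<forall>k. Suc k < length is \<longrightarrow> is ! k \<noteq> is ! Suc k) \<and>
        (\<forall>k < length is. as ! k \<in> ?A (is ! k)) \<longrightarrow>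
      ((\<forall>k < length as. \<phi> (as ! k) = 0) \<longrightarrow> \<phi> (prod_list as) = 0)"
    using vmono unfolding vmono_indep_def by blast
  have c1: "?is \<noteq> []" using assms(3) by auto
  have c2: "\<forall>k. Suc k < length ?is \<longrightarrow> ?is ! k \<noteq> ?is ! Suc k"
    using assms(1) by (simp add: successively_conv_nth)
  have c3: "\<forall>k < length ?is. ?as ! k \<in> ?A (?is ! k)" by (simp add: letter_eval_def peval_in_gen_alg)
  have c4: "\<forall>k < length ?as. \<phi> (?as ! k) = 0"
  proof (intro allI impI)
    fix k assume k: "k < length ?as"
    then have "fst (W ! k) \<ge> 1" using assms(2) by (auto dest!: nth_mem)
    then show "\<phi> (?as ! k) = 0" using assms(4) k by (simp add: letter_eval_def phi_peval)
  qed
  show ?thesis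
    using H[rule_format, OF conjI[OF c1 conjI[OF assms(2) conjI[OF _ conjI[OF c2 c3]]]]] c4
    by (simp add: word_prod_def)
qed

lemma phi_word_prod_center_split:
  assumes "set (map fst W) \<subseteq> {1..}" "j < length W"
  shows "\<phi> (word_prod W) = \<phi> (word_prod (W[j := (fst (W ! j), snd (W ! j) - [:poly_mean (snd (W ! j)):])]))
     + poly_mean (snd (W ! j)) * \<phi> (word_prod (W[j := (fst (W ! j), 1)]))"
proof -
  let ?i = "fst (W ! j)" and ?p = "snd (W ! j)"
  let ?c = "poly_mean ?p"
  let ?L = "word_prod (take j W)" and ?R = "word_prod (drop (Suc j) W)"
  have i: "?i \<ge> 1" using assms by (auto dest!: nth_mem)
  have "letter_eval (W ! j) = peval ?i (?p - [:?c:]) + smul ?c (peval ?i 1)"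
    by (simp add: letter_eval_def peval_diff peval_const peval_1)
  then have "word_prod W = ?L * peval ?i (?p - [:?c:]) * ?R + smul ?c (?L * peval ?i 1 * ?R)"
    using word_prod_nth[OF assms(2)] by (simp add: distrib_left distrib_right smul_mult_left smul_mult_right)
  then show ?thesis using assms(2)
    by (simp add: word_prod_list_update phi_add phi_smul letter_eval_def)
qed

lemma phi_word_prod_singleton:
  assumes "set (map fst W) \<subseteq> {1..}" "(i, p) \<in> set W" "count_list (map fst W) i = 1"
    and p: "poly_mean p = 0"
  shows "\<phi> (word_prod W) = 0"
  using assms(1-3)
proof (induction W rule: word_centering_induct[where z = "\<lambda>q. poly_mean q = 0"])
  case (merge W)
  have mem: "(i, p) \<in> set (merge_adj W)" using in_set_merge_adj merge.prems(2,3) by blast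
  then have "count_list (map fst (merge_adj W)) i \<noteq> 0"
    by (simp only: count_list_0_iff) force
  then have "count_list (map fst (merge_adj W)) i = 1"
    using count_list_merge_adj_le[of W i] merge.prems(3) by linarith
  moreover have "set (map fst (merge_adj W)) \<subseteq> {1..}"
    using set_merge_adj merge.prems(1) by blast
  ultimately show ?case using merge.IH mem word_prod_merge_adj[OF merge.prems(1)] by simp
next
  case (centered W)
  have "W \<noteq> []" using centered.prems(2) by auto
  moreover have "\<forall>k<length W. poly_mean (snd (W ! k)) = 0" using centered.hyps(2) by simp
  ultimately show ?case using phi_word_prod_centered centered.hyps(1) centered.prems(1) by blast
next
  case (split W j)
  let ?c = "poly_mean (snd (W ! j))"
  let ?W1 = "W[j := (fst (W ! j), snd (W ! j) - [:?c:])]" and ?R = "take j W @ drop (Suc j) W"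
  have ne: "(i, p) \<noteq> W ! j" using split.hyps(3) p by (metis snd_conv)
  have "(map fst W)[j := fst (W ! j)] = map fst W" using split.hyps(2) by (simp add: list_update_same_conv)
  then have fst_W1: "map fst ?W1 = map fst W" by (simp add: map_update)
  obtain k where k: "k < length W" "W ! k = (i, p)" using split.prems(2) by (auto simp: in_set_conv_nth)
  moreover have "k \<noteq> j" using k(2) ne by auto
  ultimately have "?W1 ! k = (i, p)" by simp
  then have "(i, p) \<in> set ?W1" using k(1) by (metis length_list_update nth_mem)
  then have zero1: "\<phi> (word_prod ?W1) = 0"
    using split.IH(1)[OF poly_mean_centered[of "snd (W ! j)"]] split.prems(1,3) fst_W1
    by (simp only:)
  have "set W = insert (W ! j) (set ?R)"
    using arg_cong[where f = set, OF id_take_nth_drop[OF split.hyps(2)]] by simp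
  then have mem: "(i, p) \<in> set ?R" using split.prems(2) ne by blast
  then have "count_list (map fst ?R) i \<noteq> 0" by (simp only: count_list_0_iff) force
  then have "count_list (map fst ?R) i = 1"
    using count_list_delete_le[of j W i] split.prems(3) by linarith
  moreover have "set (map fst ?R) \<subseteq> {1..}"
    using split.prems(1) by (auto dest: in_set_takeD in_set_dropD)
  ultimately have "\<phi> (word_prod ?R) = 0" using split.IH(2) mem by blast
  then have "\<phi> (word_prod (W[j := (fst (W ! j), 1)])) = 0"
    using phi_word_prod_unit_deletion[OF split.hyps(1) split.prems(1) split.hyps(2,4)] by simp
  then show ?case using phi_word_prod_center_split[OF split.prems(1) split.hyps(2)] zero1 by simp
qed

lemma phi_word_prod_strict_mono_invariant:
  assumes "set (map fst W) \<subseteq> {1..}" "strict_mono_on (set (map fst W)) f" "f ` set (map fst W) \<subseteq> {1..}"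
  shows "\<phi> (word_prod (map (apfst f) W)) = \<phi> (word_prod W)"
  using assms
proof (induction W rule: word_centering_induct[where z = "\<lambda>q. poly_mean q = 0"])
  case (merge W)
  let ?g = "apfst f"
  have sub: "set (map fst (merge_adj W)) \<subseteq> set (map fst W)" by (rule set_merge_adj)
  have mapped: "set (map fst (map ?g W)) \<subseteq> {1..}" using merge.prems(3) by auto
  have "\<phi> (word_prod (map ?g W)) = \<phi> (word_prod (merge_adj (map ?g W)))"
    using word_prod_merge_adj[OF mapped] by simp
  also have "merge_adj (map ?g W) = map ?g (merge_adj W)"
    using merge_adj_map_apfst[OF strict_mono_on_imp_inj_on[OF merge.prems(2)]] .
  also have "\<phi> (word_prod \<dots>) = \<phi> (word_prod (merge_adj W))"
    using merge.IH merge.prems sub monotone_on_subset[OF merge.prems(2) sub] by blast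
  also have "\<dots> = \<phi> (word_prod W)" using word_prod_merge_adj[OF merge.prems(1)] by simp
  finally show ?case .
next
  case (centered W)
  show ?case
  proof (cases "W = []")
    case False
    have alt: "successively (\<noteq>) (map fst (map (apfst f) W))"
      using centered.hyps(1) successively_map_apfst_inj[OF strict_mono_on_imp_inj_on[OF centered.prems(2)]]
      by blast
    have mapped: "set (map fst (map (apfst f) W)) \<subseteq> {1..}" using centered.prems(3) by auto
    have "\<forall>k<length W. poly_mean (snd (W ! k)) = 0" using centered.hyps(2) by simp
    then show ?thesis
      using phi_word_prod_centered[OF alt mapped] phi_word_prod_centered[OF centered.hyps(1)
          centered.prems(1)] False by simp
  qed simp
next
  case (split W j)
  let ?g = "apfst f" and ?c = "poly_mean (snd (W ! j))"
  let ?W1 = "W[j := (fst (W ! j), snd (W ! j) - [:?c:])]" and ?W2 = "W[j := (fst (W ! j), 1)]"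
  let ?R = "take j W @ drop (Suc j) W"
  have inj: "inj_on f (set (map fst W))" by (rule strict_mono_on_imp_inj_on[OF split.prems(2)])
  have mapped: "set (map fst (map ?g W)) \<subseteq> {1..}" using split.prems(3) by auto
  have alt: "successively (\<noteq>) (map fst (map ?g W))"
    using split.hyps(1) successively_map_apfst_inj[OF inj] by blast
  have j: "j < length (map ?g W)" "\<forall>k<j. poly_mean (snd (map ?g W ! k)) = 0"
    using split.hyps(2,4) by auto
  have "(map fst W)[j := fst (W ! j)] = map fst W" using split.hyps(2) by (simp add: list_update_same_conv)
  then have fst_W1: "map fst ?W1 = map fst W" by (simp add: map_update)
  have W1: "\<phi> (word_prod (map ?g ?W1)) = \<phi> (word_prod ?W1)"
    using split.IH(1)[OF poly_mean_centered[of "snd (W ! j)"]] split.prems fst_W1 by (simp only:)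
  have R_sub: "set (map fst ?R) \<subseteq> set (map fst W)" by (auto dest: in_set_takeD in_set_dropD)
  have R: "\<phi> (word_prod (map ?g ?R)) = \<phi> (word_prod ?R)"
    using split.IH(2) split.prems R_sub monotone_on_subset[OF split.prems(2) R_sub] by blast
  have vs: "vseq (take (Suc j) (map fst (map ?g W))) \<longleftrightarrow> vseq (take (Suc j) (map fst W))"
    using vseq_map_iff[OF monotone_on_subset[OF split.prems(2) set_take_subset]]
    by (simp add: take_map)
  have "\<phi> (word_prod (map ?g W)) = \<phi> (word_prod (map ?g ?W1)) + ?c * \<phi> (word_prod (map ?g ?W2))"
    using phi_word_prod_center_split[OF mapped j(1)] split.hyps(2) by (simp add: map_update)
  also have "\<phi> (word_prod (map ?g ?W2)) = \<phi> (word_prod ?W2)"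
    using phi_word_prod_unit_deletion[OF alt mapped j] R vs
      phi_word_prod_unit_deletion[OF split.hyps(1) split.prems(1) split.hyps(2,4)] split.hyps(2)
    by (simp add: map_update take_map drop_map)
  also have "\<phi> (word_prod (map ?g ?W1)) + ?c * \<phi> (word_prod ?W2) = \<phi> (word_prod W)"
    using phi_word_prod_center_split[OF split.prems(1) split.hyps(2)] W1 by simp
  finally show ?case .
qed

section \<open>Mixed moments of the family\<close>

definition x_word :: "nat list \<Rightarrow> complex poly word" where "x_word w = map (\<lambda>i. (i, poly_X)) w"

definition mixed_moment :: "nat list \<Rightarrow> complex" where "mixed_moment w = \<phi> (prod_list (map a w))"

lemma map_fst_x_word[simp]: "map fst (x_word w) = w" by (induction w) (simp_all add: x_word_def)

lemma x_word_append[simp]: "x_word (v @ w) = x_word v @ x_word w" by (simp add: x_word_def)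

lemma length_x_word[simp]: "length (x_word w) = length w" by (simp add: x_word_def)

lemma word_prod_x_word: "set w \<subseteq> {1..} \<Longrightarrow> word_prod (x_word w) = prod_list (map a w)"
  by (induction w) (auto simp: x_word_def word_prod_Cons letter_eval_def peval_X)

lemma mixed_moment_singleton:
  assumes "set w \<subseteq> {1..}" "count_list w i = 1"
  shows "mixed_moment w = 0"
proof -
  have "i \<in> set w" using assms(2) by (metis count_notin zero_neq_one)
  then have "(i, poly_X) \<in> set (x_word w)" by (auto simp: x_word_def)
  then have "\<phi> (word_prod (x_word w)) = 0" using phi_word_prod_singleton[of "x_word w" i poly_X] assms poly_mean_X by simp
  then show ?thesis using word_prod_x_word[OF assms(1)] by (simp add: mixed_moment_def)
qed

lemma mixed_moment_strict_mono_invariant: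
  assumes "set w \<subseteq> {1..}" "strict_mono_on (set w) f" "f ` set w \<subseteq> {1..}"
  shows "mixed_moment (map f w) = mixed_moment w"
proof -
  have e: "map (apfst f) (x_word w) = x_word (map f w)" by (simp add: x_word_def)
  have s: "set (map f w) \<subseteq> {1..}" using assms(3) by auto
  have "\<phi> (word_prod (map (apfst f) (x_word w))) = \<phi> (word_prod (x_word w))" using phi_word_prod_strict_mono_invariant[of "x_word w" f] assms by simp
  then show ?thesis using word_prod_x_word[OF assms(1)] word_prod_x_word[OF s] e by (simp add: mixed_moment_def)
qed

lemma mixed_moment_Nil: "mixed_moment [] = 1" by (simp add: mixed_moment_def)

lemma mixed_moment_adjacent_repeat:
  assumes set: "set (ys @ [v, v] @ zs) \<subseteq> {1..}" and v: "v \<notin> set ys" "v \<notin> set zs"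
    and alt: "successively (\<noteq>) (ys @ [v])"
  shows "mixed_moment (ys @ [v, v] @ zs) = (if vseq (ys @ [v]) then mixed_moment (ys @ zs) else 0)"
proof -
  let ?A = "x_word ys" and ?B = "x_word zs"
  have v1: "v \<ge> 1" and sys: "set ys \<subseteq> {1..}" "set zs \<subseteq> {1..}" using set by auto
  have "prod_list (map a (ys @ [v, v] @ zs)) = word_prod ?A * peval v (poly_X * poly_X) * word_prod ?B"
    using word_prod_x_word sys v1 by (simp add: peval_X_squared power2_eq_square mult.assoc)
  also have "peval v (poly_X * poly_X) = peval v (poly_X * poly_X - 1) + peval v 1"
    by (simp add: peval_diff)
  finally have "mixed_moment (ys @ [v, v] @ zs) =
      \<phi> (word_prod (?A @ [(v, poly_X * poly_X - 1)] @ ?B)) + \<phi> (word_prod (?A @ [(v, 1)] @ ?B))"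
    by (simp add: mixed_moment_def phi_add word_prod_append word_prod_Cons letter_eval_def
        distrib_left distrib_right mult.assoc)
  moreover have "\<phi> (word_prod (?A @ [(v, poly_X * poly_X - 1)] @ ?B)) = 0"
    by (rule phi_word_prod_singleton[of _ v "poly_X * poly_X - 1"])
      (use sys v1 v poly_mean_X_squared_minus_1 in auto)
  moreover have "\<phi> (word_prod (?A @ [(v, 1)] @ ?B)) = (if vseq (ys @ [v]) then mixed_moment (ys @ zs) else 0)"
  proof -
    \<comment> \<open>Merging ?B makes the word alternating, so the unit at v can be deleted.\<close>
    let ?W = "?A @ (v, 1) # merge_adj ?B"
    have PW: "word_prod ?W = word_prod (?A @ [(v, 1)] @ ?B)"
      using word_prod_merge_adj[of ?B] sys by (simp add: word_prod_append word_prod_Cons)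
    have sW: "set (map fst ?W) \<subseteq> {1..}" using sys v1 set_merge_adj[of ?B] by auto
    have "successively (\<noteq>) (v # map fst (merge_adj ?B))"
    proof (cases "zs = []")
      case False
      then have "merge_adj ?B \<noteq> [] \<and> fst (hd (merge_adj ?B)) = hd zs"
        using hd_merge_adj[of ?B] by (simp add: x_word_def hd_map)
      moreover have "hd zs \<noteq> v" using v False by (metis hd_in_set)
      ultimately show ?thesis using successively_merge_adj[of ?B] by (simp add: successively_Cons hd_map)
    qed (simp add: x_word_def)
    then have altW: "successively (\<noteq>) (map fst ?W)"
      using alt by (simp add: successively_append_iff)
    let ?j = "length ys"
    have Wj: "?W ! ?j = (v, 1)" by (simp add: nth_append)
    have "?W[?j := (fst (?W ! ?j), 1)] = ?W[?j := ?W ! ?j]" using Wj by simp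
    then have upd: "?W[?j := (fst (?W ! ?j), 1)] = ?W" by (simp only: list_update_id)
    have cW: "\<forall>k<?j. poly_mean (snd (?W ! k)) = 0" by (simp add: nth_append x_word_def poly_mean_X)
    have tk: "take (Suc ?j) (map fst ?W) = ys @ [v]" by simp
    have rm: "take ?j ?W @ drop (Suc ?j) ?W = ?A @ merge_adj ?B" by simp
    have "\<phi> (word_prod ?W) = (if vseq (ys @ [v]) then \<phi> (word_prod (?A @ merge_adj ?B)) else 0)"
      using phi_word_prod_unit_deletion[OF altW sW _ cW] unfolding upd tk rm by simp
    moreover have "\<phi> (word_prod (?A @ merge_adj ?B)) = mixed_moment (ys @ zs)"
      using word_prod_merge_adj[of ?B] sys word_prod_x_word[of "ys @ zs"]
      by (simp add: word_prod_append mixed_moment_def)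
    ultimately show ?thesis using PW by simp
  qed
  ultimately show ?thesis by simp
qed

lemma mixed_moment_pair_word:
  "set xs \<subseteq> {1..} \<Longrightarrow> pair_word xs \<Longrightarrow>
    mixed_moment xs = (if noncrossing_word xs \<and> vmono_word xs then 1 else 0)"
proof (induction "length xs" arbitrary: xs rule: less_induct)
  case less
  show ?case
  proof (cases "successively (\<noteq>) xs")
    case True
    show ?thesis
    proof (cases "xs = []")
      case False
      have "\<phi> (word_prod (x_word xs)) = 0"
        by (rule phi_word_prod_centered) (use less.prems True False in \<open>simp_all add: x_word_def poly_mean_X comp_def\<close>)
      then have "mixed_moment xs = 0" using word_prod_x_word[OF less.prems(1)] by (simp add: mixed_moment_def)
      moreover have "\<not> noncrossing_word xs"
        using noncrossing_pair_word_not_alternating[OF _ less.prems(2) False True] by blast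
      ultimately show ?thesis by simp
    qed (simp add: mixed_moment_Nil noncrossing_word_def vmono_word_def open_stacks_def)
  next
    case False
    then obtain ys v zs where xs: "xs = ys @ [v, v] @ zs" and alt: "successively (\<noteq>) (ys @ [v])"
      using first_adjacent_repeat by blast
    have vy: "v \<notin> set ys" and vz: "v \<notin> set zs" and pr: "pair_word (ys @ zs)"
      using pair_word_delete_adjacent less.prems(2) xs by auto
    have IH: "mixed_moment (ys @ zs) = (if noncrossing_word (ys @ zs) \<and> vmono_word (ys @ zs) then 1 else 0)"
      using less.hyps[of "ys @ zs"] less.prems(1) pr xs by auto
    have red: "mixed_moment xs = (if vseq (ys @ [v]) then mixed_moment (ys @ zs) else 0)"
      using mixed_moment_adjacent_repeat[OF _ vy vz alt] less.prems(1) xs by simp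
    show ?thesis
    proof (cases "noncrossing_word xs")
      case False
      then show ?thesis using red IH noncrossing_word_delete_adjacent[OF vy vz] xs by simp
    next
      case True
      have "successively (\<noteq>) (take (length ys) xs)" using alt xs by (simp add: successively_append_iff)
      moreover have "length ys \<le> length xs" using xs by simp
      ultimately have "distinct (take (length ys) xs)"
        using noncrossing_pair_word_distinct_prefix[OF True less.prems(2)] by blast
      then have "distinct ys" using xs by simp
      then show ?thesis
        using red IH True noncrossing_word_delete_adjacent[OF vy vz] vmono_word_delete_adjacent[OF _ vy vz] xs
        by simp
    qed
  qed
qed

lemma mixed_moment_standardize:
  assumes "set w \<subseteq> {1..}"
  shows "mixed_moment w = mixed_moment (standardize w)"
proof -
  let ?T = "set w"
  have f: "finite ?T" by simp
  have s1: "set (standardize w) \<subseteq> {1..}" using standardize_props(2)[of w] by auto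
  have s2: "strict_mono_on (set (standardize w)) (unrank ?T)" using strict_mono_on_unrank[OF f] standardize_props(2)[of w] by simp
  have s3: "unrank ?T ` set (standardize w) \<subseteq> {1..}" using unrank_image[OF f] standardize_props(2)[of w] assms by simp
  have "mixed_moment (map (unrank ?T) (standardize w)) = mixed_moment (standardize w)" by (rule mixed_moment_strict_mono_invariant[OF s1 s2 s3])
  then show ?thesis using standardize_props(3)[of w] by simp
qed

definition moment_bound :: "nat \<Rightarrow> real" where "moment_bound n = (\<Sum>s\<in>words n n. norm (mixed_moment s))"

lemma norm_mixed_moment_le:
  assumes "w \<in> words n N"
  shows "norm (mixed_moment w) \<le> moment_bound n"
proof -
  have sw: "set w \<subseteq> {1..}" "length w = n" using assms unfolding words_def by auto
  have "standardize w \<in> words n n" using set_standardize_subset[of w] standardize_props(1)[of w] sw unfolding words_def by simp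
  then have "norm (mixed_moment (standardize w)) \<le> moment_bound n" unfolding moment_bound_def
    by (rule member_le_sum[where f = "\<lambda>s. norm (mixed_moment s)"]) (auto simp: finite_words)
  then show ?thesis using mixed_moment_standardize[OF sw(1)] by simp
qed

lemma norm_sum_non_pair_words_le:
  assumes "1 \<le> N" "1 \<le> n"
  shows "norm (\<Sum>w\<in>words n N - {w. pair_word w}. mixed_moment w) \<le> moment_bound n * (Suc ((n - 1) div 2) * N ^ ((n - 1) div 2) * ((n - 1) div 2) ^ n)"
proof -
  let ?d = "(n - 1) div 2"
  let ?A = "words n N - {w. pair_word w}" and ?B = "{w \<in> words n N. card (set w) \<le> ?d}"
  have z: "mixed_moment w = 0" if "w \<in> ?A" "w \<notin> ?B" for w
  proof -
    have sw: "set w \<subseteq> {1..}" "length w = n" using that unfolding words_def by auto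
    show ?thesis
    proof (cases "\<exists>x\<in>set w. count_list w x = 1")
      case True then show ?thesis using mixed_moment_singleton[OF sw(1)] by blast
    next
      case False
      then have "2 * card (set w) < n" using length_non_pair_word[of w] that sw by simp
      then have "card (set w) \<le> ?d" by simp
      then show ?thesis using that by simp
    qed
  qed
  have "norm (\<Sum>w\<in>?A. mixed_moment w) \<le> (\<Sum>w\<in>?A. norm (mixed_moment w))" by (rule norm_sum)
  also have "\<dots> = (\<Sum>w\<in>?A \<inter> ?B. norm (mixed_moment w))"
    using z by (intro sum.mono_neutral_right) (auto simp: finite_words)
  also have "\<dots> \<le> (\<Sum>w\<in>?B. norm (mixed_moment w))"
    by (rule sum_mono2) (auto simp: finite_words)
  also have "\<dots> \<le> (\<Sum>w\<in>?B. moment_bound n)" using norm_mixed_moment_le by (intro sum_mono) auto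
  also have "\<dots> = moment_bound n * card ?B" by simp
  also have "\<dots> \<le> moment_bound n * (Suc ?d * N ^ ?d * ?d ^ n)"
  proof (rule mult_left_mono)
    show "real (card ?B) \<le> real (Suc ?d * N ^ ?d * ?d ^ n)" using card_words_few_letters[OF assms(1)] by (simp only: of_nat_le_iff)
    show "0 \<le> moment_bound n" unfolding moment_bound_def by (simp add: sum_nonneg)
  qed
  finally show ?thesis by simp
qed

lemma sum_pair_words_mixed_moment:
  "(\<Sum>w\<in>words (2 * k) N \<inter> {w. pair_word w}. mixed_moment w) = of_nat (N choose k) * of_nat (card (OV2 k))"
proof -
  let ?Ts = "{T. T \<subseteq> {1..N} \<and> card T = k}"
  let ?D = "?Ts \<times> std_pair_words k"
  let ?Pr = "words (2 * k) N \<inter> {w. pair_word w}"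
  let ?F = "\<lambda>(T, s). map (unrank T) s"
  have finT: "finite T" if "T \<in> ?Ts" for T using that finite_subset by blast
  note bij = bij_betw_unrank_std_pair_words[of N k]
  have Minv: "mixed_moment (?F x) = mixed_moment (snd x)" if xD: "x \<in> ?D" for x
  proof -
    obtain T s where ts: "x = (T, s)" "T \<in> ?Ts" "s \<in> std_pair_words k" using xD by auto
    have ss: "set s = {1..card T}" using ts unfolding std_pair_words_def by simp
    have "mixed_moment (map (unrank T) s) = mixed_moment s"
    proof (rule mixed_moment_strict_mono_invariant)
      show "set s \<subseteq> {1..}" using ss by auto
      show "strict_mono_on (set s) (unrank T)" using strict_mono_on_unrank[OF finT[OF ts(2)]] ss by simp
      show "unrank T ` set s \<subseteq> {1..}" using unrank_image[OF finT[OF ts(2)]] ss ts(2) by auto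
    qed
    then show ?thesis using ts by simp
  qed
  have "(\<Sum>w\<in>?Pr. mixed_moment w) = (\<Sum>x\<in>?D. mixed_moment (?F x))"
    using sum.reindex_bij_betw[OF bij, of mixed_moment] by simp
  also have "\<dots> = (\<Sum>x\<in>?D. mixed_moment (snd x))" using Minv by (rule sum.cong[OF refl])
  also have "\<dots> = (\<Sum>T\<in>?Ts. \<Sum>s\<in>std_pair_words k. mixed_moment s)"
    unfolding sum.cartesian_product by (rule sum.cong) (auto simp: case_prod_beta)
  also have "\<dots> = of_nat (card ?Ts) * (\<Sum>s\<in>std_pair_words k. mixed_moment s)" by simp
  also have "card ?Ts = N choose k" using n_subsets[of "{1..N}" k] by simp
  also have "(\<Sum>s\<in>std_pair_words k. mixed_moment s) = (\<Sum>s\<in>std_pair_words k. if noncrossing_word s \<and> vmono_word s then 1 else 0)"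
  proof (rule sum.cong[OF refl])
    fix s assume s: "s \<in> std_pair_words k"
    then have "set s \<subseteq> {1..}" "pair_word s" unfolding std_pair_words_def by auto
    then show "mixed_moment s = (if noncrossing_word s \<and> vmono_word s then 1 else 0)" using mixed_moment_pair_word by blast
  qed
  also have "\<dots> = of_nat (card {s \<in> std_pair_words k. noncrossing_word s \<and> vmono_word s})"
    using finite_std_pair_words[of k] by (simp add: sum.If_cases Int_def)
  also have "card {s \<in> std_pair_words k. noncrossing_word s \<and> vmono_word s} = card (OV2 k)" by (rule card_std_pair_words_eq_card_OV2)
  finally show ?thesis .
qed

section \<open>The central limit\<close>

lemma phi_normalized_sum_power:
  "\<phi> ((scaleR (1 / sqrt (real N)) (\<Sum>i\<in>{1..N}. a i)) ^ n) =
   complex_of_real ((1 / sqrt (real N)) ^ n) *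
     ((\<Sum>w\<in>words n N \<inter> {w. pair_word w}. mixed_moment w) +
      (\<Sum>w\<in>words n N - {w. pair_word w}. mixed_moment w))"
proof -
  have "(\<Sum>i\<in>{1..N}. a i) ^ n = (\<Sum>w\<in>words n N. prod_list (map a w))"
    unfolding words_def by (rule power_sum_eq_sum_words) simp
  then have "\<phi> ((\<Sum>i\<in>{1..N}. a i) ^ n) = (\<Sum>w\<in>words n N. mixed_moment w)"
    by (simp add: phi_sum mixed_moment_def)
  also have "\<dots> = (\<Sum>w\<in>words n N \<inter> {w. pair_word w}. mixed_moment w) +
      (\<Sum>w\<in>words n N - {w. pair_word w}. mixed_moment w)"
    by (rule sum.Int_Diff[OF finite_words])
  finally show ?thesis by (simp add: phi_scaleR)
qed

lemma tendsto_non_pair_part: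
  "(\<lambda>N. complex_of_real ((1 / sqrt (real N)) ^ n) *
     (\<Sum>w\<in>words n N - {w. pair_word w}. mixed_moment w)) \<longlonglongrightarrow> 0"
proof (cases "n = 0")
  case True
  then have "words n N - {w. pair_word w} = {}" for N unfolding words_def pair_word_def by auto
  then have "(\<Sum>w\<in>words n N - {w. pair_word w}. mixed_moment w) = 0" for N by (simp only: sum.empty)
  then show ?thesis by simp
next
  case False
  let ?d = "(n - 1) div 2"
  let ?B = "moment_bound n * (Suc ?d * ?d ^ n)"
  have B: "0 \<le> ?B" unfolding moment_bound_def by (simp add: sum_nonneg)
  let ?c = "\<lambda>N. complex_of_real ((1 / sqrt (real N)) ^ n)"
  let ?R = "\<lambda>N. \<Sum>w\<in>words n N - {w. pair_word w}. mixed_moment w"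
  have "norm (?c N * ?R N) \<le> ?B / sqrt (real N)" if N: "1 \<le> N" for N
  proof -
    have R: "norm (?R N) \<le> ?B * real N ^ ?d"
      using norm_sum_non_pair_words_le[OF N] False by (simp add: algebra_simps)
    have "norm (?c N) = (1 / sqrt (real N)) ^ n" by (simp only: norm_of_real) simp
    then have "norm (?c N * ?R N) = (1 / sqrt (real N)) ^ n * norm (?R N)" by (simp only: norm_mult)
    also have "\<dots> \<le> (1 / sqrt (real N)) ^ n * (?B * real N ^ ?d)" by (rule mult_left_mono[OF R]) simp
    also have "\<dots> \<le> ?B / sqrt (real N)"
      using power_inverse_sqrt_mult_le[OF N B, of ?d n] False by simp
    finally show ?thesis .
  qed
  then have "eventually (\<lambda>N. norm (?c N * ?R N) \<le> ?B / sqrt (real N)) sequentially"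
    unfolding eventually_sequentially by blast
  then show ?thesis by (rule Lim_null_comparison) (rule tendsto_divide_sqrt_0)
qed

lemma tendsto_pair_part:
  "(\<lambda>N. complex_of_real ((1 / sqrt (real N)) ^ n) *
     (\<Sum>w\<in>words n N \<inter> {w. pair_word w}. mixed_moment w))
   \<longlonglongrightarrow> (if even n then of_nat (card (OV2 (n div 2))) / of_nat (fact (n div 2)) else 0)"
proof (cases "even n")
  case False
  then show ?thesis using words_pair_word_odd by simp
next
  case True
  then obtain k where k: "n = 2 * k" by blast
  let ?K = "card (OV2 k)"
  have e: "complex_of_real ((1 / sqrt (real N)) ^ n) *
      (\<Sum>w\<in>words n N \<inter> {w. pair_word w}. mixed_moment w) =
      of_nat ?K * complex_of_real (real (N choose k) / real N ^ k)" for N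
  proof -
    have "(1 / sqrt (real N)) ^ n = 1 / real N ^ k" using k by (simp add: power_mult power_one_over)
    then show ?thesis using sum_pair_words_mixed_moment[of k N] k by (simp add: field_simps)
  qed
  have "(\<lambda>N. of_nat ?K * complex_of_real (real (N choose k) / real N ^ k)) \<longlonglongrightarrow>
      of_nat ?K * complex_of_real (1 / fact k)"
    by (intro tendsto_intros tendsto_binomial_div_power)
  moreover have "of_nat ?K * complex_of_real (1 / fact k) = of_nat ?K / of_nat (fact k)"
    by (simp add: field_simps)
  ultimately show ?thesis using True k e by simp
qed

theorem tendsto_phi_normalized_sum_power:
  "(\<lambda>N. \<phi> ((scaleR (1 / sqrt (real N)) (\<Sum>i\<in>{1..N}. a i)) ^ n))
    \<longlonglongrightarrow> (if even n then of_nat (card (OV2 (n div 2))) / of_nat (fact (n div 2)) else 0)"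
proof -
  note limit = tendsto_add[OF tendsto_pair_part[of n] tendsto_non_pair_part[of n]]
  show ?thesis by (simp only: phi_normalized_sum_power distrib_left) (use limit in simp)
qed

end

theorem mainTheorem1:
  fixes smul :: "complex \<Rightarrow> 'a::{real_normed_algebra_1,banach} \<Rightarrow> 'a"
    and star :: "'a \<Rightarrow> 'a"
    and \<phi> :: "'a \<Rightarrow> complex"
    and a u :: "nat \<Rightarrow> 'a"
    and n :: nat
  assumes "cstar_prob_space smul star \<phi>"
    and "vmono_indep \<phi> {1..} (\<lambda>i. gen_alg smul {a i, u i}) u"
    and "\<forall>i\<ge>1. \<forall>j\<ge>1. \<forall>k::nat. \<phi> (a i ^ k) = \<phi> (a j ^ k)"
    and "\<forall>i\<ge>1. \<phi> (a i) = 0 \<and> \<phi> (a i ^ 2) = 1"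
  shows "(\<lambda>N. \<phi> ((scaleR (1 / sqrt (real N)) (\<Sum>i\<in>{1..N}. a i)) ^ n))
    \<longlonglongrightarrow> (if even n then of_nat (card (OV2 (n div 2))) / of_nat (fact (n div 2)) else 0)"
proof -
  interpret vmono_clt smul star \<phi> a u by unfold_locales (rule assms)+
  show ?thesis by (rule tendsto_phi_normalized_sum_power)
qed

end
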